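(* Let $\phi(\mathbf{x})=u\bullet v$ and $\psi(\mathbf{x})=a\bullet b$ be two two-dimensional projective flows with smooth vector fields $\varpi\bullet\varrho$ and $\alpha\bullet\beta$, respectively. Then $\phi$ and $\psi$ commute if and only if $\phi\circ\psi$ is again a projective flow, and this happens exactly when $$\varpi_{x}\alpha+\varpi_{y}\beta=\varpi\alpha_{x}+\varrho\alpha_{y},\qquad \varrho_{x}\alpha+\varrho_{y}\beta=\varpi\beta_{x}+\varrho\beta_{y}.$$
   Context: Notation: $F\bullet G$ denotes the pair $(F,G)$, $\mathbf{x}=x\bullet y$; for a map $\phi$ and $z\in\mathbb{R}$, $\phi^{z}(\mathbf{x})=z^{-1}\phi(\mathbf{x}z)$. A (two-dimensional) projective flow is a map $\phi$ satisfying $\phi^{z+w}=\phi^{z}\circ\phi^{w}$ for real $z,w$ (the projective translation equation $\frac{1}{z+w}\phi(\mathbf{x}(z+w))=\frac{1}{w}\phi(\phi(\mathbf{x}z)\frac{w}{z})$) and $\lim_{z\to0}\phi^{z}(\mathbf{x})=\mathbf{x}$. Its vector field is $\varpi\bullet\varrho=\frac{d}{dz}\frac{\phi(xz,yz)}{z}\big|_{z=0}$, a pair of $2$-homogeneous functions. Two flows $\phi,\psi$ commute if $\phi^{z}\circ\psi^{w}=\psi^{w}\circ\phi^{z}$ for all real $z,w$. Subscripts denote partial derivatives. *)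

theory Defs
  imports "HOL-Analysis.Analysis"
begin

type_synonym pt = "real \<times> real"

text \<open>The map phi^z(x) = z^{-1} phi(x z); at z = 0 it is the identity
  (the value forced by the boundary condition lim_{z->0} phi^z(x) = x).\<close>
definition piter :: "(pt \<Rightarrow> pt) \<Rightarrow> real \<Rightarrow> pt \<Rightarrow> pt" where
  "piter \<phi> z x = (if z = 0 then x else (1 / z) *\<^sub>R \<phi> (z *\<^sub>R x))"

definition proj_flow :: "(pt \<Rightarrow> pt) \<Rightarrow> bool" where
  "proj_flow \<phi> \<longleftrightarrow>
     (\<forall>z w. piter \<phi> (z + w) = piter \<phi> z \<circ> piter \<phi> w) \<and>
     (\<forall>x. ((\<lambda>z. (1 / z) *\<^sub>R \<phi> (z *\<^sub>R x)) \<longlongrightarrow> x) (at 0))"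

definition has_vfield :: "(pt \<Rightarrow> pt) \<Rightarrow> (pt \<Rightarrow> real) \<Rightarrow> (pt \<Rightarrow> real) \<Rightarrow> bool" where
  "has_vfield \<phi> \<omega> \<rho> \<longleftrightarrow>
     (\<forall>x. ((\<lambda>z. piter \<phi> z x) has_vector_derivative (\<omega> x, \<rho> x)) (at 0))"

definition commute :: "(pt \<Rightarrow> pt) \<Rightarrow> (pt \<Rightarrow> pt) \<Rightarrow> bool" where
  "commute \<phi> \<psi> \<longleftrightarrow> (\<forall>z w. piter \<phi> z \<circ> piter \<psi> w = piter \<psi> w \<circ> piter \<phi> z)"

definition pdx :: "(pt \<Rightarrow> real) \<Rightarrow> pt \<Rightarrow> real" where
  "pdx f p = deriv (\<lambda>t. f (t, snd p)) (fst p)"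

definition pdy :: "(pt \<Rightarrow> real) \<Rightarrow> pt \<Rightarrow> real" where
  "pdy f p = deriv (\<lambda>t. f (fst p, t)) (snd p)"

text \<open>Smooth (C-infinity) functions on the plane: differentiable everywhere, with
  smooth partial derivatives.\<close>
coinductive smooth2 :: "(pt \<Rightarrow> real) \<Rightarrow> bool" where
  "(\<forall>p. f differentiable (at p)) \<Longrightarrow> smooth2 (pdx f) \<Longrightarrow> smooth2 (pdy f) \<Longrightarrow> smooth2 f"

end

theory Submission
  imports Defs
begin

text \<open>The projective flows \<open>\<phi>\<close> and \<open>\<psi>\<close> are genuine one-parameter groups
  \<open>t \<mapsto> \<phi>\<^sup>t\<close>, \<open>s \<mapsto> \<psi>\<^sup>s\<close> of the plane, the flows of their vector fields.
  Since \<open>(\<phi> \<circ> \<psi>)\<^sup>z = \<phi>\<^sup>z \<circ> \<psi>\<^sup>z\<close>, the translation equation for \<open>\<phi> \<circ> \<psi>\<close> is equivalent to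
  \<open>\<psi>\<^sup>z \<circ> \<phi>\<^sup>w = \<phi>\<^sup>w \<circ> \<psi>\<^sup>z\<close>. Commutation of two flows is equivalent to the vanishing of
  the Lie bracket of their fields, and the two stated equations are the components of that bracket.
  Second-order Taylor expansion shows that \<open>\<psi>\<^sup>s \<phi>\<^sup>t y - \<phi>\<^sup>t \<psi>\<^sup>s y\<close> is \<open>s t\<close> times the
  bracket at \<open>y\<close> up to \<open>o(s\<^sup>2 + t\<^sup>2)\<close>, locally uniformly, so commuting flows have zero bracket. Conversely, if the bracket vanishes, subdividing \<open>[0, s] \<times> [0, t]\<close> into
  \<open>N\<^sup>2\<close> small cells and telescoping with the local Lipschitz bounds of the flows shows that
  the flows commute near every point for short times; continuation in time extends this to
  all times.\<close>

lemma vector_derivative_bound: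
  fixes f :: "real \<Rightarrow> 'a::real_normed_vector"
  assumes "a \<le> b"
    and "\<And>x. x \<in> {a..b} \<Longrightarrow> (f has_vector_derivative f' x) (at x within {a..b})"
    and "\<And>x. x \<in> {a..b} \<Longrightarrow> norm (f' x) \<le> B"
  shows "norm (f b - f a) \<le> B * (b - a)"
proof -
  have "norm (f b - f a) \<le> B * norm (b - a)"
  proof (rule differentiable_bound[where f'="\<lambda>x h. h *\<^sub>R f' x"])
    show "(f has_derivative (\<lambda>h. h *\<^sub>R f' x)) (at x within {a..b})" if "x \<in> {a..b}" for x
      using assms(2)[OF that] by (simp add: has_vector_derivative_def)
    show "onorm (\<lambda>h. h *\<^sub>R f' x) \<le> B" if "x \<in> {a..b}" for x
    proof (rule onorm_le)
      fix h :: real show "norm (h *\<^sub>R f' x) \<le> B * norm h"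
        using mult_left_mono[OF assms(3)[OF that] abs_ge_zero[of h]] by (simp add: mult.commute)
    qed
  qed (use assms in auto)
  then show ?thesis using assms(1) by simp
qed

lemma continuation_induct:
  fixes Q :: "real \<Rightarrow> bool"
  assumes step: "\<And>S. S \<ge> 0 \<Longrightarrow> (\<forall>\<sigma>. 0 \<le> \<sigma> \<and> \<sigma> < S \<longrightarrow> Q \<sigma>) \<Longrightarrow>
      \<exists>e>0. \<forall>\<sigma>. 0 \<le> \<sigma> \<and> \<sigma> < S + e \<longrightarrow> Q \<sigma>"
    and "\<sigma>0 \<ge> 0"
  shows "Q \<sigma>0"
proof (rule ccontr)
  assume "\<not> Q \<sigma>0"
  define A where "A = {\<sigma>. 0 \<le> \<sigma> \<and> \<not> Q \<sigma>}"
  have ne: "A \<noteq> {}" using \<open>\<not> Q \<sigma>0\<close> assms(2) A_def by auto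
  have bdd: "bdd_below A" unfolding A_def by (rule bdd_belowI[of _ 0]) auto
  have S0: "Inf A \<ge> 0" by (rule cInf_greatest[OF ne]) (auto simp: A_def)
  have "\<forall>\<sigma>. 0 \<le> \<sigma> \<and> \<sigma> < Inf A \<longrightarrow> Q \<sigma>"
    using cInf_lower[OF _ bdd] by (force simp: A_def)
  from step[OF S0 this] obtain e where e: "e > 0" "\<forall>\<sigma>. 0 \<le> \<sigma> \<and> \<sigma> < Inf A + e \<longrightarrow> Q \<sigma>"
    by blast
  obtain a where "a \<in> A" "a < Inf A + e" using cInf_less_iff[OF ne bdd, of "Inf A + e"] e(1) by auto
  then show False using e A_def by auto
qed

lemma gronwall_distance:
  fixes g1 g2 :: "real \<Rightarrow> 'a::real_inner"
  assumes "L \<ge> 0"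
    and d1: "\<And>\<sigma>. \<sigma> \<in> {0..T} \<Longrightarrow> (g1 has_vector_derivative f (g1 \<sigma>)) (at \<sigma>)"
    and d2: "\<And>\<sigma>. \<sigma> \<in> {0..T} \<Longrightarrow> (g2 has_vector_derivative f (g2 \<sigma>)) (at \<sigma>)"
    and lip: "\<And>\<sigma>. \<sigma> \<in> {0..T} \<Longrightarrow> norm (f (g1 \<sigma>) - f (g2 \<sigma>)) \<le> L * norm (g1 \<sigma> - g2 \<sigma>)"
    and s: "\<sigma> \<in> {0..T}"
  shows "norm (g1 \<sigma> - g2 \<sigma>) \<le> norm (g1 0 - g2 0) * exp (L * \<sigma>)"
proof -
  define d where "d = (\<lambda>t. g1 t - g2 t)"
  define h where "h = (\<lambda>t. (d t \<bullet> d t) * exp (- (2 * L) * t))"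
  have hd: "\<exists>y. DERIV h t :> y \<and> y \<le> 0" if t: "0 \<le> t" "t \<le> \<sigma>" for t
  proof -
    have tT: "t \<in> {0..T}" using t s by auto
    let ?d' = "f (g1 t) - f (g2 t)"
    have dd: "(d has_vector_derivative ?d') (at t)"
      unfolding d_def using d1[OF tT] d2[OF tT] by (rule has_vector_derivative_diff)
    have di: "((\<lambda>t. d t \<bullet> d t) has_real_derivative 2 * (d t \<bullet> ?d')) (at t)"
      unfolding has_field_derivative_def
      by (rule has_derivative_eq_rhs, rule has_derivative_inner[OF dd[unfolded has_vector_derivative_def]
            dd[unfolded has_vector_derivative_def]]) (auto simp: fun_eq_iff inner_commute algebra_simps)
    have "DERIV h t :> (2 * (d t \<bullet> ?d')) * exp (- (2 * L) * t)
        + (d t \<bullet> d t) * (exp (- (2 * L) * t) * (- (2 * L)))"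
      unfolding h_def by (rule derivative_eq_intros di refl | simp)+
    moreover have "d t \<bullet> ?d' \<le> L * (d t \<bullet> d t)"
    proof -
      have "d t \<bullet> ?d' \<le> norm (d t) * norm ?d'" by (rule norm_cauchy_schwarz)
      also have "\<dots> \<le> norm (d t) * (L * norm (d t))"
        using lip[OF tT] unfolding d_def by (simp add: mult_left_mono)
      also have "\<dots> = L * (d t \<bullet> d t)"
        by (simp add: power2_norm_eq_inner[symmetric] power2_eq_square)
      finally show ?thesis .
    qed
    then have "(2 * (d t \<bullet> ?d') - 2 * L * (d t \<bullet> d t)) * exp (- (2 * L) * t) \<le> 0"
      by (simp add: mult_nonpos_nonneg)
    ultimately show ?thesis by (auto simp: algebra_simps)
  qed
  have "h \<sigma> \<le> h 0" using DERIV_nonpos_imp_nonincreasing[of 0 \<sigma> h] hd s by auto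
  then have "(norm (d \<sigma>))\<^sup>2 \<le> (norm (d 0))\<^sup>2 * exp (2 * L * \<sigma>)"
    by (simp add: h_def power2_norm_eq_inner exp_minus field_simps)
  also have "\<dots> = (norm (d 0) * exp (L * \<sigma>))\<^sup>2"
    by (simp add: power_mult_distrib power2_eq_square exp_add[symmetric])
  finally have "norm (d \<sigma>) \<le> norm (d 0) * exp (L * \<sigma>)"
    by (rule power2_le_imp_le) simp
  then show ?thesis by (simp add: d_def)
qed

lemma compact_uniform_parameter:
  fixes P :: "real \<Rightarrow> 'a::metric_space \<Rightarrow> bool"
  assumes "compact S" and loc: "\<forall>p\<in>S. \<exists>r>0. \<exists>T>0. \<forall>y\<in>cball p r. P T y"
    and mono: "\<And>T T' y. P T y \<Longrightarrow> 0 < T' \<Longrightarrow> T' \<le> T \<Longrightarrow> P T' y"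
  shows "\<exists>T>0. \<forall>y\<in>S. P T y"
proof -
  obtain g where g: "\<forall>p\<in>S. fst (g p) > 0 \<and> snd (g p) > 0 \<and> (\<forall>y\<in>cball p (fst (g p)). P (snd (g p)) y)"
    using bchoice[of S "\<lambda>p q. fst q > 0 \<and> snd q > 0 \<and> (\<forall>y\<in>cball p (fst q). P (snd q) y)"] loc
    by fastforce
  have cover: "S \<subseteq> (\<Union>p\<in>S. ball p (fst (g p)))" using g by force
  obtain D where D: "D \<subseteq> S" "finite D" "S \<subseteq> (\<Union>p\<in>D. ball p (fst (g p)))"
    using compactE_image[OF \<open>compact S\<close> _ cover] by blast
  show ?thesis
  proof (cases "D = {}")
    case True
    then show ?thesis using D by (intro exI[of _ 1]) auto
  next
    case False
    define T where "T = Min ((\<lambda>p. snd (g p)) ` D)"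
    have T: "T > 0" unfolding T_def using D False g by (subst Min_gr_iff) auto
    have "P T y" if "y \<in> S" for y
    proof -
      obtain p where p: "p \<in> D" "y \<in> ball p (fst (g p))" using D \<open>y \<in> S\<close> by blast
      then have "P (snd (g p)) y" using g D by auto
      moreover have "T \<le> snd (g p)" unfolding T_def using D p by auto
      ultimately show ?thesis using mono T by blast
    qed
    then show ?thesis using T by blast
  qed
qed

lemma continuous_at_earlier_point:
  fixes \<gamma> :: "real \<Rightarrow> 'a::metric_space"
  assumes "continuous (at S) \<gamma>" and S: "S \<ge> 0" and "r > 0" and T0: "T0 > 0"
  obtains \<sigma>' where "0 \<le> \<sigma>'" "\<sigma>' \<le> S" "S - T0/2 \<le> \<sigma>'" "\<sigma>' < S \<or> \<sigma>' = 0"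
    "\<gamma> \<sigma>' \<in> ball (\<gamma> S) r"
proof -
  obtain d where d: "d > 0" "\<forall>u. dist u S < d \<longrightarrow> dist (\<gamma> u) (\<gamma> S) < r"
    using assms unfolding continuous_at_eps_delta by blast
  define \<sigma>' where "\<sigma>' = max 0 (S - min d T0 / 2)"
  have "dist \<sigma>' S < d" using d T0 S by (auto simp: \<sigma>'_def dist_real_def)
  then have "dist (\<gamma> \<sigma>') (\<gamma> S) < r" using d(2) by blast
  then have "\<gamma> \<sigma>' \<in> ball (\<gamma> S) r" by (simp add: dist_commute)
  moreover have "0 \<le> \<sigma>'" "\<sigma>' \<le> S" "S - T0/2 \<le> \<sigma>'" "\<sigma>' < S \<or> \<sigma>' = 0"
    using d T0 S by (auto simp: \<sigma>'_def)
  ultimately show ?thesis using that by blast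
qed

lemma lipschitz_on_cball_continuous_at:
  fixes g :: "'a::real_normed_vector \<Rightarrow> 'b::real_normed_vector"
  assumes L: "\<forall>a\<in>cball p r. \<forall>b\<in>cball p r. norm (g a - g b) \<le> K * norm (a - b)" and K: "K \<ge> 1"
    and z: "z \<in> ball p r"
  shows "continuous (at z) g"
  unfolding continuous_at_eps_delta
proof (intro allI impI)
  fix e :: real assume e: "e > 0"
  define d where "d = min (r - dist p z) (e / K)"
  have "dist (g x) (g z) < e" if x: "dist x z < d" for x
  proof -
    have "dist p x \<le> dist p z + dist z x" by (rule dist_triangle)
    then have "x \<in> cball p r" using x by (simp add: d_def dist_commute)
    then have "norm (g x - g z) \<le> K * norm (x - z)" using L z by auto
    also have "\<dots> < K * (e / K)" using x K by (intro mult_strict_left_mono) (auto simp: d_def dist_norm)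
    finally show ?thesis using K by (simp add: dist_norm)
  qed
  moreover have "d > 0" using z e K by (simp add: d_def)
  ultimately show "\<exists>d>0. \<forall>x. dist x z < d \<longrightarrow> dist (g x) (g z) < e" by blast
qed

section \<open>Flows of \<open>C\<^sup>1\<close> vector fields\<close>

definition is_flow :: "(real \<Rightarrow> 'a \<Rightarrow> 'a) \<Rightarrow> ('a \<Rightarrow> 'a::real_normed_vector) \<Rightarrow> bool" where
  "is_flow F f \<longleftrightarrow> (\<forall>s t y. F (s + t) y = F s (F t y)) \<and> (\<forall>y. F 0 y = y) \<and>
     (\<forall>t y. ((\<lambda>s. F s y) has_vector_derivative f (F t y)) (at t))"

text \<open>The derivative \<open>Df\<close> is part of the data; the second clause is its continuity
  in operator norm.\<close>
definition C1_field :: "('a \<Rightarrow> 'a) \<Rightarrow> ('a \<Rightarrow> 'a \<Rightarrow> 'a::real_normed_vector) \<Rightarrow> bool" where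
  "C1_field f Df \<longleftrightarrow> (\<forall>p. (f has_derivative Df p) (at p)) \<and>
     (\<forall>c \<epsilon>. \<epsilon> > 0 \<longrightarrow> (\<exists>r>0. \<forall>x\<in>ball c r. \<forall>h. norm (Df x h - Df c h) \<le> \<epsilon> * norm h))"

lemma is_flow_add: "is_flow F f \<Longrightarrow> F (s + t) y = F s (F t y)"
  unfolding is_flow_def by blast

lemma is_flow_zero [simp]: "is_flow F f \<Longrightarrow> F 0 y = y"
  unfolding is_flow_def by blast

lemma is_flow_derivative: "is_flow F f \<Longrightarrow> ((\<lambda>s. F s y) has_vector_derivative f (F t y)) (at t)"
  unfolding is_flow_def by blast

lemma is_flow_continuous: "is_flow F f \<Longrightarrow> continuous (at t) (\<lambda>s. F s y)"
  using is_flow_derivative has_vector_derivative_continuous by blast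

lemma is_flow_neg_left: "is_flow F f \<Longrightarrow> F (- s) (F s y) = y"
  using is_flow_add[of F f "- s" s y] by simp

lemma is_flow_neg_right: "is_flow F f \<Longrightarrow> F s (F (- s) y) = y"
  using is_flow_add[of F f s "- s" y] by simp

lemma is_flow_reverse:
  assumes "is_flow F f"
  shows "is_flow (\<lambda>t. F (- t)) (\<lambda>p. - f p)"
  unfolding is_flow_def
proof (intro conjI allI)
  fix s t y
  show "F (- (s + t)) y = F (- s) (F (- t) y)" using is_flow_add[OF assms, of "- s" "- t" y] by simp
next
  fix y
  show "F (- 0) y = y" using assms by simp
next
  fix t y
  have "((\<lambda>s. - s) has_vector_derivative -1) (at t)"
    by (auto intro!: derivative_eq_intros simp: has_vector_derivative_def)
  from vector_diff_chain_at[OF this is_flow_derivative[OF assms]]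
  show "((\<lambda>s. F (- s) y) has_vector_derivative - f (F (- t) y)) (at t)"
    by (simp add: o_def)
qed

lemma C1_field_derivative: "C1_field f Df \<Longrightarrow> (f has_derivative Df p) (at p)"
  unfolding C1_field_def by blast

lemma C1_field_continuous: "C1_field f Df \<Longrightarrow> continuous (at p) f"
  using C1_field_derivative has_derivative_continuous by blast

lemma C1_field_derivative_continuous:
  "C1_field f Df \<Longrightarrow> \<epsilon> > 0 \<Longrightarrow> \<exists>r>0. \<forall>x\<in>ball c r. \<forall>h. norm (Df x h - Df c h) \<le> \<epsilon> * norm h"
  unfolding C1_field_def by blast

lemma C1_field_linear: "C1_field f Df \<Longrightarrow> linear (Df p)"
  using C1_field_derivative has_derivative_linear by blast

lemma C1_field_derivative_bounded:
  assumes "C1_field f Df"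
  obtains K where "K > 0" "\<And>h. norm (Df p h) \<le> K * norm h"
  using bounded_linear.pos_bounded[OF has_derivative_bounded_linear[OF C1_field_derivative[OF assms]]]
  by (metis mult.commute)

lemma C1_field_uminus:
  assumes "C1_field f Df"
  shows "C1_field (\<lambda>p. - f p) (\<lambda>p h. - Df p h)"
  unfolding C1_field_def
proof (intro conjI allI impI)
  show "((\<lambda>p. - f p) has_derivative (\<lambda>h. - Df p h)) (at p)" for p
    using C1_field_derivative[OF assms] by (rule has_derivative_minus)
  show "\<exists>r>0. \<forall>x\<in>ball c r. \<forall>h. norm (- Df x h - - Df c h) \<le> \<epsilon> * norm h" if "\<epsilon> > 0" for c \<epsilon>
    using C1_field_derivative_continuous[OF assms that, of c] by (simp add: norm_minus_commute)
qed

lemma C1_field_locally_lipschitz: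
  fixes f :: "'a::{real_normed_vector, perfect_space} \<Rightarrow> 'a"
  assumes f: "C1_field f Df"
  obtains R M L where "R > 0" "M > 0" "L > 0" "\<forall>x\<in>cball c R. norm (f x) \<le> M"
    "\<forall>a\<in>cball c R. \<forall>b\<in>cball c R. norm (f a - f b) \<le> L * norm (a - b)"
proof -
  obtain K where K: "K > 0" "\<And>h. norm (Df c h) \<le> K * norm h"
    using C1_field_derivative_bounded[OF f] by blast
  obtain r1 where r1: "r1 > 0" "\<forall>x\<in>ball c r1. \<forall>h. norm (Df x h - Df c h) \<le> 1 * norm h"
    using C1_field_derivative_continuous[OF f, of 1 c] by auto
  obtain r2 where r2: "r2 > 0" "\<forall>x. dist x c < r2 \<longrightarrow> dist (f x) (f c) < 1"
    using C1_field_continuous[OF f, of c] unfolding continuous_at_eps_delta by (meson zero_less_one)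
  define R where "R = min r1 r2 / 2"
  have R: "R > 0" "R < r1" "R < r2" using r1 r2 by (auto simp: R_def)
  have "norm (f x) \<le> norm (f c) + 1" if "x \<in> cball c R" for x
  proof -
    have "dist (f x) (f c) < 1" using r2(2)[rule_format, of x] R that by (simp add: dist_commute)
    then show ?thesis using norm_triangle_sub[of "f x" "f c"] by (simp add: dist_norm)
  qed
  moreover have "norm (f a - f b) \<le> (K + 1) * norm (a - b)" if "a \<in> cball c R" "b \<in> cball c R" for a b
  proof (rule differentiable_bound[where S="cball c R" and f'=Df])
    show "(f has_derivative Df x) (at x within cball c R)" for x
      using C1_field_derivative[OF f] has_derivative_at_withinI by blast
    show "onorm (Df x) \<le> K + 1" if "x \<in> cball c R" for x
    proof (rule onorm_le)
      fix h
      have "norm (Df x h - Df c h) \<le> norm h" using r1(2) that R by auto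
      then show "norm (Df x h) \<le> (K + 1) * norm h"
        using norm_triangle_sub[of "Df x h" "Df c h"] K(2)[of h] by (simp add: algebra_simps)
    qed
  qed (use that in auto)
  moreover have "norm (f c) + 1 > 0" "K + 1 > 0" using K(1) by (auto simp: add_nonneg_pos)
  ultimately show ?thesis using that R(1) by blast
qed

text \<open>Quantified pairs are kept whole: splitting them into components makes simp on
  the estimates below very slow.\<close>
declare split_paired_All [simp del] split_paired_Ex [simp del]

lemma flow_displacement_bound:
  assumes F: "is_flow F f" and "0 \<le> t" and "\<And>s. s \<in> {0..t} \<Longrightarrow> norm (f (F s y)) \<le> M"
  shows "norm (F t y - y) \<le> M * t"
  using vector_derivative_bound[of 0 t "\<lambda>s. F s y" "\<lambda>s. f (F s y)" M] assms
    has_vector_derivative_at_within[OF is_flow_derivative[OF F]] by simp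

text \<open>A first exit from \<open>cball c R\<close> before time \<open>R/(4 M)\<close> is excluded by continuation, since
  the speed is at most \<open>M\<close> there.\<close>
lemma flow_stays_in_cball_forward:
  assumes F: "is_flow F f" and M: "M > 0" and "R > 0" and B: "\<forall>x\<in>cball c R. norm (f x) \<le> M"
    and y: "y \<in> cball c (R/4)" and t: "0 \<le> t" "t \<le> R/(4*M)"
  shows "F t y \<in> cball c R"
proof -
  define T where "T = R/(4*M)"
  have "\<sigma> \<le> T \<longrightarrow> F \<sigma> y \<in> cball c R" if "\<sigma> \<ge> 0" for \<sigma>
  proof (rule continuation_induct[OF _ that])
    fix S :: real assume S: "S \<ge> 0" and hyp: "\<forall>\<sigma>. 0 \<le> \<sigma> \<and> \<sigma> < S \<longrightarrow> \<sigma> \<le> T \<longrightarrow> F \<sigma> y \<in> cball c R"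
    show "\<exists>e>0. \<forall>\<sigma>. 0 \<le> \<sigma> \<and> \<sigma> < S + e \<longrightarrow> \<sigma> \<le> T \<longrightarrow> F \<sigma> y \<in> cball c R"
    proof (cases "S > T")
      case True
      then show ?thesis using hyp by (intro exI[of _ 1]) auto
    next
      case False
      obtain d where d: "d > 0" "\<forall>u. dist u S < d \<longrightarrow> dist (F u y) (F S y) < R/8"
        using is_flow_continuous[OF F, of S y] \<open>R > 0\<close> unfolding continuous_at_eps_delta
        by (metis zero_less_divide_iff zero_less_numeral)
      define u0 where "u0 = max 0 (S - d/2)"
      have u0: "0 \<le> u0" "u0 \<le> S" "dist u0 S < d" using d S by (auto simp: u0_def dist_real_def)
      have near: "dist (F S y) (F u y) < R/8" if "S \<le> u" "u < S + d/2" for u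
        using d(2)[rule_format, of u] d(1) that by (simp add: dist_real_def dist_commute)
      have "norm (F u0 y - y) \<le> M * u0"
      proof (rule flow_displacement_bound[OF F u0(1)])
        fix u assume "u \<in> {0..u0}"
        then have "u < S \<or> u = 0" using d by (auto simp: u0_def)
        then have "F u y \<in> cball c R" using hyp False y F \<open>R > 0\<close> \<open>u \<in> {0..u0}\<close> by auto
        then show "norm (f (F u y)) \<le> M" using B by blast
      qed
      also have "\<dots> \<le> M * T" using u0 False M by (simp add: mult_left_mono)
      finally have "dist y (F u0 y) \<le> R/4" using M by (simp add: T_def dist_norm norm_minus_commute)
      moreover have "dist (F u0 y) (F S y) < R/8" using d(2) u0(3) by blast
      moreover have "dist c y \<le> R/4" using y by simp
      ultimately have late: "F u y \<in> cball c R" if "S \<le> u" "u < S + d/2" for u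
        using near[OF that] dist_triangle[of c "F u y" y] dist_triangle[of y "F u y" "F u0 y"]
          dist_triangle[of "F u0 y" "F u y" "F S y"] \<open>R > 0\<close>
        unfolding mem_cball by linarith
      show ?thesis
      proof (intro exI[of _ "d/2"] conjI allI impI)
        fix \<sigma> assume "0 \<le> \<sigma> \<and> \<sigma> < S + d/2" "\<sigma> \<le> T"
        then show "F \<sigma> y \<in> cball c R" using hyp late by (cases "\<sigma> < S") auto
      qed (use d in simp)
    qed
  qed
  then show ?thesis using t T_def by blast
qed

lemma flow_stays_in_cball:
  assumes F: "is_flow F f" and M: "M > 0" and "R > 0" and B: "\<forall>x\<in>cball c R. norm (f x) \<le> M"
    and y: "y \<in> cball c (R/4)" and t: "\<bar>t\<bar> \<le> R/(4*M)"
  shows "F t y \<in> cball c R" and "norm (F t y - y) \<le> M * \<bar>t\<bar>"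
proof -
  have B': "\<forall>x\<in>cball c R. norm (- f x) \<le> M" using B by simp
  have stay: "F s y \<in> cball c R" if "\<bar>s\<bar> \<le> R/(4*M)" for s
  proof (cases "s \<ge> 0")
    case True
    then show ?thesis using flow_stays_in_cball_forward[OF F M \<open>R > 0\<close> B y] that by simp
  next
    case False
    then show ?thesis
      using flow_stays_in_cball_forward[OF is_flow_reverse[OF F] M \<open>R > 0\<close> B' y, of "- s"] that
      by simp
  qed
  then show "F t y \<in> cball c R" using t .
  have displacement: "norm (F s y - y) \<le> M * s" if F: "is_flow F f"
    "\<forall>x\<in>cball c R. norm (f x) \<le> M" "\<And>u. u \<in> {0..s} \<Longrightarrow> F u y \<in> cball c R" "0 \<le> s"
    for F f s
    using flow_displacement_bound[OF F(1) F(4)] F(2,3) by blast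
  show "norm (F t y - y) \<le> M * \<bar>t\<bar>"
  proof (cases "t \<ge> 0")
    case True
    then show ?thesis using displacement[OF F B stay] t by simp
  next
    case False
    then show ?thesis using displacement[OF is_flow_reverse[OF F] B', of "- t"] stay t by simp
  qed
qed

lemma flow_lipschitz:
  fixes F :: "real \<Rightarrow> 'a::real_inner \<Rightarrow> 'a"
  assumes F: "is_flow F f" and M: "M > 0" and "R > 0" and B: "\<forall>x\<in>cball c R. norm (f x) \<le> M"
    and L: "L \<ge> 0" "\<forall>a\<in>cball c R. \<forall>b\<in>cball c R. norm (f a - f b) \<le> L * norm (a - b)"
    and a: "a \<in> cball c (R/4)" and b: "b \<in> cball c (R/4)" and t: "\<bar>t\<bar> \<le> R/(4*M)"
  shows "norm (F t a - F t b) \<le> norm (a - b) * exp (L * \<bar>t\<bar>)"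
proof -
  have forward: "norm (F t a - F t b) \<le> norm (a - b) * exp (L * t)"
    if F: "is_flow F f" and B: "\<forall>x\<in>cball c R. norm (f x) \<le> M"
      and L: "\<forall>a\<in>cball c R. \<forall>b\<in>cball c R. norm (f a - f b) \<le> L * norm (a - b)"
      and t: "0 \<le> t" "t \<le> R/(4*M)" for F f t
  proof -
    have "norm (F t a - F t b) \<le> norm (F 0 a - F 0 b) * exp (L * t)"
    proof (rule gronwall_distance[where f=f and T="R/(4*M)", OF \<open>L \<ge> 0\<close>])
      show "norm (f (F s a) - f (F s b)) \<le> L * norm (F s a - F s b)" if "s \<in> {0..R/(4*M)}" for s
        using flow_stays_in_cball(1)[OF F M \<open>R > 0\<close> B a, of s]
          flow_stays_in_cball(1)[OF F M \<open>R > 0\<close> B b, of s] that L by auto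
    qed (use is_flow_derivative[OF F] t in auto)
    then show ?thesis using F by simp
  qed
  have "\<forall>a\<in>cball c R. \<forall>b\<in>cball c R. norm (- f a - - f b) \<le> L * norm (a - b)"
    using L(2) by (simp add: norm_minus_commute)
  from forward[OF F B L(2), of t] forward[OF is_flow_reverse[OF F] _ this, of "- t"] B t
  show ?thesis by (cases "t \<ge> 0") auto
qed

lemma flow_local_bounds:
  fixes F :: "real \<Rightarrow> 'a::{real_inner, perfect_space} \<Rightarrow> 'a"
  assumes F: "is_flow F f" and f: "C1_field f Df"
  obtains r T M K where "r > 0" "T > 0" "M > 0" "K \<ge> 1"
    "\<forall>y\<in>cball c r. \<forall>t. \<bar>t\<bar> \<le> T \<longrightarrow> norm (F t y - y) \<le> M * \<bar>t\<bar>"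
    "\<forall>a\<in>cball c r. \<forall>b\<in>cball c r. \<forall>t. \<bar>t\<bar> \<le> T \<longrightarrow> norm (F t a - F t b) \<le> K * norm (a - b)"
proof -
  obtain R M L where R: "R > 0" "M > 0" "L > 0" and B: "\<forall>x\<in>cball c R. norm (f x) \<le> M"
    and Lip: "\<forall>a\<in>cball c R. \<forall>b\<in>cball c R. norm (f a - f b) \<le> L * norm (a - b)"
    using C1_field_locally_lipschitz[OF f, of c] by blast
  define T where "T = R/(4*M)"
  have T: "T > 0" using R by (simp add: T_def)
  have "norm (F t a - F t b) \<le> exp (L * T) * norm (a - b)"
    if "a \<in> cball c (R/4)" "b \<in> cball c (R/4)" "\<bar>t\<bar> \<le> T" for a b t
  proof -
    have "norm (F t a - F t b) \<le> norm (a - b) * exp (L * \<bar>t\<bar>)"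
      using flow_lipschitz[OF F R(2) R(1) B _ Lip] that R by (simp add: T_def)
    also have "\<dots> \<le> norm (a - b) * exp (L * T)"
      using that R by (intro mult_left_mono) auto
    finally show ?thesis by (simp add: mult.commute)
  qed
  moreover have "exp (L * T) \<ge> 1" using R T by simp
  ultimately show ?thesis
    using that[of "R/4" T M "exp (L * T)"] flow_stays_in_cball(2)[OF F R(2) R(1) B] R T
    by (auto simp: T_def)
qed

section \<open>Second-order expansions and the bracket\<close>

lemma vector_derivative_chain_linear:
  assumes "(\<gamma> has_vector_derivative v) (at s)" "(f has_derivative D) (at (\<gamma> s))"
  shows "((\<lambda>u. f (\<gamma> u)) has_vector_derivative D v) (at s)"
proof -
  have "((\<lambda>u. f (\<gamma> u)) has_derivative (\<lambda>h. D (h *\<^sub>R v))) (at s)"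
    using has_derivative_compose[OF assms(1)[unfolded has_vector_derivative_def] assms(2)] .
  moreover have "linear D" using assms(2) by (rule has_derivative_linear)
  ultimately show ?thesis by (simp add: has_vector_derivative_def linear_scale)
qed

text \<open>\<open>Df z (f z)\<close> is the acceleration of the flow through \<open>z\<close>.\<close>
lemma C1_field_acceleration_continuous:
  fixes f :: "'a::{real_normed_vector, perfect_space} \<Rightarrow> 'a"
  assumes f: "C1_field f Df" and e: "\<epsilon> > 0"
  shows "\<exists>r>0. \<forall>z\<in>cball c r. norm (Df z (f z) - Df c (f c)) \<le> \<epsilon>"
proof -
  obtain R M L where R: "R > 0" "M > 0" "L > 0" and B: "\<forall>x\<in>cball c R. norm (f x) \<le> M"
    and Lip: "\<forall>a\<in>cball c R. \<forall>b\<in>cball c R. norm (f a - f b) \<le> L * norm (a - b)"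
    using C1_field_locally_lipschitz[OF f, of c] by blast
  obtain K where K: "K > 0" "\<And>h. norm (Df c h) \<le> K * norm h"
    using C1_field_derivative_bounded[OF f] by blast
  obtain r1 where r1: "r1 > 0" "\<forall>x\<in>ball c r1. \<forall>h. norm (Df x h - Df c h) \<le> \<epsilon> / (2 * M) * norm h"
    using C1_field_derivative_continuous[OF f, of "\<epsilon> / (2 * M)" c] e R by auto
  define r where "r = min R (min (r1/2) (\<epsilon> / (2 * K * L)))"
  have "norm (Df z (f z) - Df c (f c)) \<le> \<epsilon>" if z: "z \<in> cball c r" for z
  proof -
    have zR: "z \<in> cball c R" using z by (auto simp: r_def)
    have "Df z (f z) - Df c (f c) = (Df z (f z) - Df c (f z)) + Df c (f z - f c)"
      using C1_field_linear[OF f, of c] by (simp add: linear_diff)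
    then have "norm (Df z (f z) - Df c (f c)) \<le> norm (Df z (f z) - Df c (f z)) + norm (Df c (f z - f c))"
      by (metis norm_triangle_ineq)
    also have "norm (Df z (f z) - Df c (f z)) \<le> \<epsilon> / (2 * M) * norm (f z)"
      using r1(2) z r1(1) by (auto simp: r_def)
    also have "\<dots> \<le> \<epsilon> / (2 * M) * M" using B zR e R by (intro mult_left_mono) auto
    also have "norm (Df c (f z - f c)) \<le> K * norm (f z - f c)" by (rule K(2))
    also have "\<dots> \<le> K * (L * norm (z - c))" using Lip zR K R by (intro mult_left_mono) auto
    also have "\<dots> \<le> K * (L * (\<epsilon> / (2 * K * L)))"
      using z K R by (intro mult_left_mono) (auto simp: r_def dist_norm norm_minus_commute)
    finally show ?thesis using K R by (simp add: field_simps)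
  qed
  moreover have "r > 0" using R r1 K e by (simp add: r_def)
  ultimately show ?thesis by blast
qed

lemma flow_taylor2_forward:
  fixes F :: "real \<Rightarrow> 'a::{real_normed_vector, perfect_space} \<Rightarrow> 'a"
  assumes F: "is_flow F f" and f: "C1_field f Df" and e: "\<epsilon> > 0"
  obtains r T where "r > 0" "T > 0" "\<forall>y\<in>cball c r. \<forall>t. 0 \<le> t \<and> t \<le> T \<longrightarrow>
     norm (F t y - y - t *\<^sub>R f y - (t\<^sup>2/2) *\<^sub>R Df y (f y)) \<le> \<epsilon> * t\<^sup>2"
proof -
  define G where "G z = Df z (f z)" for z
  obtain R0 where R0: "R0 > 0" "\<forall>z\<in>cball c R0. norm (G z - G c) \<le> \<epsilon>/2"
    using C1_field_acceleration_continuous[OF f, of "\<epsilon>/2" c] e unfolding G_def by auto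
  obtain R M L where R: "R > 0" "M > 0" "L > 0" and B: "\<forall>x\<in>cball c R. norm (f x) \<le> M"
    and "\<forall>a\<in>cball c R. \<forall>b\<in>cball c R. norm (f a - f b) \<le> L * norm (a - b)"
    by (rule C1_field_locally_lipschitz[OF f, of c])
  define Rm where "Rm = min R R0"
  have Rm: "Rm > 0" using R R0 by (simp add: Rm_def)
  have Bm: "\<forall>x\<in>cball c Rm. norm (f x) \<le> M" using B by (auto simp: Rm_def)
  have "norm (F t y - y - t *\<^sub>R f y - (t\<^sup>2/2) *\<^sub>R G y) \<le> \<epsilon> * t\<^sup>2"
    if y: "y \<in> cball c (Rm/4)" and t: "0 \<le> t" "t \<le> Rm/(4*M)" for y t
  proof -
    have G_near: "norm (G (F s y) - G y) \<le> \<epsilon>" if "s \<in> {0..t}" for s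
    proof -
      have "F s y \<in> cball c Rm" "y \<in> cball c Rm"
        using flow_stays_in_cball(1)[OF F R(2) Rm Bm y, of s] that t y Rm by auto
      then have "norm (G (F s y) - G c) \<le> \<epsilon>/2" "norm (G y - G c) \<le> \<epsilon>/2"
        using R0(2) by (auto simp: Rm_def)
      then show ?thesis using norm_triangle_ineq4[of "G (F s y) - G c" "G y - G c"] by simp
    qed
    have speed_error: "norm (f (F s y) - f y - s *\<^sub>R G y) \<le> \<epsilon> * s" if s: "s \<in> {0..t}" for s
    proof -
      have "norm ((f (F s y) - f y - s *\<^sub>R G y) - (f (F 0 y) - f y - 0 *\<^sub>R G y)) \<le> \<epsilon> * (s - 0)"
      proof (rule vector_derivative_bound[where f'="\<lambda>v. G (F v y) - G y"])
        fix v
        have "((\<lambda>u. f (F u y)) has_vector_derivative G (F v y)) (at v)"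
          unfolding G_def
          by (rule vector_derivative_chain_linear[OF is_flow_derivative[OF F] C1_field_derivative[OF f]])
        then have "((\<lambda>u. f (F u y) - f y - u *\<^sub>R G y) has_vector_derivative G (F v y) - 0 - 1 *\<^sub>R G y) (at v)"
          by (intro derivative_intros) (auto intro!: derivative_eq_intros simp: has_vector_derivative_def)
        then show "((\<lambda>u. f (F u y) - f y - u *\<^sub>R G y) has_vector_derivative G (F v y) - G y) (at v within {0..s})"
          by (simp add: has_vector_derivative_at_within)
      qed (use s G_near in auto)
      then show ?thesis using F by simp
    qed
    have "norm ((F t y - y - t *\<^sub>R f y - (t\<^sup>2/2) *\<^sub>R G y) - (F 0 y - y - 0 *\<^sub>R f y - (0\<^sup>2/2) *\<^sub>R G y))
        \<le> (\<epsilon> * t) * (t - 0)"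
    proof (rule vector_derivative_bound[where f'="\<lambda>s. f (F s y) - f y - s *\<^sub>R G y"])
      fix s
      show "((\<lambda>s. F s y - y - s *\<^sub>R f y - (s\<^sup>2/2) *\<^sub>R G y) has_vector_derivative
          f (F s y) - f y - s *\<^sub>R G y) (at s within {0..t})"
      proof -
        have "((\<lambda>s. F s y - y - s *\<^sub>R f y - (s\<^sup>2/2) *\<^sub>R G y) has_vector_derivative
            f (F s y) - 0 - 1 *\<^sub>R f y - (2 * s / 2) *\<^sub>R G y) (at s)"
          using is_flow_derivative[OF F, of y s]
          by (intro derivative_intros) (auto intro!: derivative_eq_intros simp: has_vector_derivative_def)
        then show ?thesis by (simp add: has_vector_derivative_at_within)
      qed
      show "norm (f (F s y) - f y - s *\<^sub>R G y) \<le> \<epsilon> * t" if "s \<in> {0..t}"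
        by (rule order_trans[OF speed_error[OF that]]) (use that e in \<open>auto intro: mult_left_mono\<close>)
    qed (use t in auto)
    then show ?thesis using F by (simp add: power2_eq_square mult.assoc)
  qed
  then show ?thesis using that[of "Rm/4" "Rm/(4*M)"] Rm R unfolding G_def by auto
qed

lemma flow_taylor2:
  fixes F :: "real \<Rightarrow> 'a::{real_normed_vector, perfect_space} \<Rightarrow> 'a"
  assumes F: "is_flow F f" and f: "C1_field f Df" and e: "\<epsilon> > 0"
  obtains r T where "r > 0" "T > 0" "\<forall>y\<in>cball c r. \<forall>t. \<bar>t\<bar> \<le> T \<longrightarrow>
     norm (F t y - y - t *\<^sub>R f y - (t\<^sup>2/2) *\<^sub>R Df y (f y)) \<le> \<epsilon> * t\<^sup>2"
proof -
  obtain r1 T1 where r1: "r1 > 0" "T1 > 0" and E1: "\<forall>y\<in>cball c r1. \<forall>t. 0 \<le> t \<and> t \<le> T1 \<longrightarrow>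
      norm (F t y - y - t *\<^sub>R f y - (t\<^sup>2/2) *\<^sub>R Df y (f y)) \<le> \<epsilon> * t\<^sup>2"
    using flow_taylor2_forward[OF F f e] by blast
  obtain r2 T2 where r2: "r2 > 0" "T2 > 0" and E2: "\<forall>y\<in>cball c r2. \<forall>t. 0 \<le> t \<and> t \<le> T2 \<longrightarrow>
      norm (F (- t) y - y - t *\<^sub>R (- f y) - (t\<^sup>2/2) *\<^sub>R (- Df y (- f y))) \<le> \<epsilon> * t\<^sup>2"
    using flow_taylor2_forward[OF is_flow_reverse[OF F] C1_field_uminus[OF f] e] by blast
  have "norm (F t y - y - t *\<^sub>R f y - (t\<^sup>2/2) *\<^sub>R Df y (f y)) \<le> \<epsilon> * t\<^sup>2"
    if y: "y \<in> cball c (min r1 r2)" and t: "\<bar>t\<bar> \<le> min T1 T2" for y t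
  proof (cases "t \<ge> 0")
    case True
    then show ?thesis using E1 y t by auto
  next
    case False
    then have "norm (F (- (- t)) y - y - (- t) *\<^sub>R (- f y) - ((- t)\<^sup>2/2) *\<^sub>R (- Df y (- f y)))
        \<le> \<epsilon> * (- t)\<^sup>2"
      using E2[rule_format, of y "- t"] y t by auto
    moreover have "Df y (- f y) = - Df y (f y)" using C1_field_linear[OF f] by (simp add: linear_neg)
    ultimately show ?thesis by simp
  qed
  then show ?thesis using that[of "min r1 r2" "min T1 T2"] r1 r2 by auto
qed

lemma C1_field_uniform_linearization:
  fixes f :: "'a::{real_normed_vector, perfect_space} \<Rightarrow> 'a"
  assumes f: "C1_field f Df" and e: "\<epsilon> > 0"
  obtains r where "r > 0"
    "\<forall>a\<in>cball c r. \<forall>b\<in>cball c r. norm (f a - f b - Df b (a - b)) \<le> \<epsilon> * norm (a - b)"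
proof -
  obtain r0 where r0: "r0 > 0" "\<forall>x\<in>ball c r0. \<forall>h. norm (Df x h - Df c h) \<le> \<epsilon>/2 * norm h"
    using C1_field_derivative_continuous[OF f, of "\<epsilon>/2" c] e by auto
  have "norm (f a - f b - Df b (a - b)) \<le> norm (a - b) * \<epsilon>"
    if a: "a \<in> cball c (r0/2)" and b: "b \<in> cball c (r0/2)" for a b
  proof (rule differentiable_bound_linearization[where S="cball c (r0/2)" and f'=Df and ?x0.0=b])
    show "b + t *\<^sub>R (a - b) \<in> cball c (r0/2)" if "t \<in> {0..1}" for t
    proof -
      have "b + t *\<^sub>R (a - b) = (1 - t) *\<^sub>R b + t *\<^sub>R a" by (simp add: algebra_simps)
      then show ?thesis using convex_cball[of c "r0/2"] a b that unfolding convex_def by auto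
    qed
    show "(f has_derivative Df x) (at x within cball c (r0/2))" for x
      using C1_field_derivative[OF f] has_derivative_at_withinI by blast
    show "onorm (Df x - Df b) \<le> \<epsilon>" if x: "x \<in> cball c (r0/2)" for x
    proof (rule onorm_le)
      fix h
      have "norm (Df x h - Df c h) \<le> \<epsilon>/2 * norm h" "norm (Df b h - Df c h) \<le> \<epsilon>/2 * norm h"
        using x b r0 by auto
      then show "norm ((Df x - Df b) h) \<le> \<epsilon> * norm h"
        using norm_triangle_ineq4[of "Df x h - Df c h" "Df b h - Df c h"] by (simp add: fun_diff_def)
    qed
  qed (use b in auto)
  then show ?thesis using that[of "r0/2"] r0 by (auto simp: mult.commute)
qed

text \<open>Second-order expansion of \<open>w = B s z\<close> with \<open>z = A t y\<close>, from the expansions of the two flows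
  and the linearisation of \<open>b\<close> at \<open>y\<close>; \<open>a, ga, b, gb\<close> are the fields and accelerations at \<open>y\<close>,
  \<open>b', gb'\<close> those of \<open>B\<close> at \<open>z\<close>.\<close>
lemma second_order_composition:
  fixes w z y a ga b gb b' gb' :: "'a::real_normed_vector"
  assumes "linear D" and "K \<ge> 0" and D: "\<And>h. norm (D h) \<le> K * norm h"
    and e1: "norm (w - z - s *\<^sub>R b' - (s\<^sup>2/2) *\<^sub>R gb') \<le> \<eta>/8 * s\<^sup>2"
    and e2: "norm (z - y - t *\<^sub>R a - (t\<^sup>2/2) *\<^sub>R ga) \<le> \<eta>/8 * t\<^sup>2"
    and e3: "norm (b' - b - D (z - y)) \<le> \<eta>/2 * \<bar>t\<bar>"
    and e4: "norm (gb' - gb) \<le> \<eta>/4"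
    and ga: "norm ga \<le> C"
    and s: "\<bar>s\<bar> * (K * (C/2 + \<eta>/8)) \<le> \<eta>/8"
    and "\<eta> > 0"
  shows "norm (w - (y + t *\<^sub>R a + (t\<^sup>2/2) *\<^sub>R ga + s *\<^sub>R b + (s * t) *\<^sub>R D a + (s\<^sup>2/2) *\<^sub>R gb))
    \<le> \<eta> * (s\<^sup>2 + t\<^sup>2)"
proof -
  define r1 where "r1 = w - z - s *\<^sub>R b' - (s\<^sup>2/2) *\<^sub>R gb'"
  define r2 where "r2 = z - y - t *\<^sub>R a - (t\<^sup>2/2) *\<^sub>R ga"
  define r3 where "r3 = b' - b - D (z - y)"
  define \<rho> where "\<rho> = z - y - t *\<^sub>R a"
  have "norm \<rho> \<le> t\<^sup>2/2 * norm ga + norm r2"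
    using norm_triangle_ineq[of "(t\<^sup>2/2) *\<^sub>R ga" r2] by (simp add: \<rho>_def r2_def)
  also have "t\<^sup>2/2 * norm ga \<le> t\<^sup>2/2 * C" using ga by (intro mult_left_mono) auto
  finally have "norm \<rho> \<le> (C/2 + \<eta>/8) * t\<^sup>2" using e2 by (simp add: r2_def algebra_simps)
  then have "K * norm \<rho> \<le> K * ((C/2 + \<eta>/8) * t\<^sup>2)" using \<open>K \<ge> 0\<close> by (rule mult_left_mono)
  then have D\<rho>: "norm (D \<rho>) \<le> K * ((C/2 + \<eta>/8) * t\<^sup>2)" using D[of \<rho>] by linarith
  have "D (z - y) = t *\<^sub>R D a + D \<rho>"
    using \<open>linear D\<close> by (simp add: \<rho>_def linear_diff linear_scale)
  then have "w - (y + t *\<^sub>R a + (t\<^sup>2/2) *\<^sub>R ga + s *\<^sub>R b + (s * t) *\<^sub>R D a + (s\<^sup>2/2) *\<^sub>R gb)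
      = r1 + r2 + s *\<^sub>R (D \<rho> + r3) + (s\<^sup>2/2) *\<^sub>R (gb' - gb)"
    by (simp add: r1_def r2_def r3_def algebra_simps)
  also have "norm \<dots> \<le> norm r1 + norm r2 + \<bar>s\<bar> * norm (D \<rho> + r3) + s\<^sup>2/2 * norm (gb' - gb)"
    using norm_triangle_ineq[of "r1 + r2 + s *\<^sub>R (D \<rho> + r3)" "(s\<^sup>2/2) *\<^sub>R (gb' - gb)"]
      norm_triangle_ineq[of "r1 + r2" "s *\<^sub>R (D \<rho> + r3)"] norm_triangle_ineq[of r1 r2]
    by simp
  also have "\<dots> \<le> \<eta>/8 * s\<^sup>2 + \<eta>/8 * t\<^sup>2 + \<bar>s\<bar> * (K * ((C/2 + \<eta>/8) * t\<^sup>2) + \<eta>/2 * \<bar>t\<bar>)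
      + s\<^sup>2/2 * (\<eta>/4)"
  proof -
    have "norm (D \<rho> + r3) \<le> K * ((C/2 + \<eta>/8) * t\<^sup>2) + \<eta>/2 * \<bar>t\<bar>"
      using norm_triangle_ineq[of "D \<rho>" r3] D\<rho> e3 by (simp add: r3_def)
    then have "\<bar>s\<bar> * norm (D \<rho> + r3) \<le> \<bar>s\<bar> * (K * ((C/2 + \<eta>/8) * t\<^sup>2) + \<eta>/2 * \<bar>t\<bar>)"
      by (rule mult_left_mono) simp
    moreover have "s\<^sup>2/2 * norm (gb' - gb) \<le> s\<^sup>2/2 * (\<eta>/4)" using e4 by (intro mult_left_mono) auto
    ultimately show ?thesis using e1 e2 unfolding r1_def r2_def by linarith
  qed
  also have "\<dots> \<le> \<eta> * (s\<^sup>2 + t\<^sup>2)"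
  proof -
    have "\<bar>s\<bar> * (K * ((C/2 + \<eta>/8) * t\<^sup>2)) = (\<bar>s\<bar> * (K * (C/2 + \<eta>/8))) * t\<^sup>2"
      by (simp only: mult.assoc)
    also have "\<dots> \<le> \<eta>/8 * t\<^sup>2" using s by (rule mult_right_mono) simp
    finally have A: "\<bar>s\<bar> * (K * ((C/2 + \<eta>/8) * t\<^sup>2)) \<le> \<eta>/8 * t\<^sup>2" .
    have "\<bar>s\<bar> * (\<eta>/2 * \<bar>t\<bar>) = \<eta>/2 * (\<bar>s\<bar> * \<bar>t\<bar>)" by (simp only: mult.left_commute)
    also have "\<dots> \<le> \<eta>/2 * ((s\<^sup>2 + t\<^sup>2)/2)"
      using sum_squares_bound[of "\<bar>s\<bar>" "\<bar>t\<bar>"] \<open>\<eta> > 0\<close> by (intro mult_left_mono) (auto simp: power2_abs)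
    finally have B: "\<bar>s\<bar> * (\<eta>/2 * \<bar>t\<bar>) \<le> \<eta>/2 * ((s\<^sup>2 + t\<^sup>2)/2)" .
    have "0 \<le> \<eta> * s\<^sup>2" "0 \<le> \<eta> * t\<^sup>2" using \<open>\<eta> > 0\<close> by simp_all
    then show ?thesis using A B by (simp add: algebra_simps)
  qed
  finally show ?thesis .
qed

lemma C1_field_derivative_locally_bounded:
  assumes f: "C1_field f Df"
  obtains r K where "r > 0" "K \<ge> 0" "\<And>x h. x \<in> cball c r \<Longrightarrow> norm (Df x h) \<le> K * norm h"
proof -
  obtain K where K: "K > 0" "\<And>h. norm (Df c h) \<le> K * norm h"
    using C1_field_derivative_bounded[OF f] by blast
  obtain r where r: "r > 0" "\<forall>x\<in>ball c r. \<forall>h. norm (Df x h - Df c h) \<le> 1 * norm h"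
    using C1_field_derivative_continuous[OF f, of 1 c] by auto
  have "norm (Df x h) \<le> (K + 1) * norm h" if "x \<in> cball c (r/2)" for x h
  proof -
    have "norm (Df x h - Df c h) \<le> norm h" using r that by auto
    then show ?thesis using norm_triangle_sub[of "Df x h" "Df c h"] K(2)[of h] by (simp add: algebra_simps)
  qed
  then show ?thesis using that[of "r/2" "K + 1"] r K by auto
qed

lemma flow_composition_taylor2:
  fixes A B :: "real \<Rightarrow> 'a::{real_inner, perfect_space} \<Rightarrow> 'a"
  assumes A: "is_flow A a" and fa: "C1_field a Da" and B: "is_flow B b" and fb: "C1_field b Db"
    and "\<eta> > 0"
  obtains r T where "r > 0" "T > 0" "\<forall>y\<in>cball c r. \<forall>s t. \<bar>s\<bar> \<le> T \<and> \<bar>t\<bar> \<le> T \<longrightarrow>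
    norm (B s (A t y) - (y + t *\<^sub>R a y + (t\<^sup>2/2) *\<^sub>R Da y (a y) + s *\<^sub>R b y + (s * t) *\<^sub>R Db y (a y)
       + (s\<^sup>2/2) *\<^sub>R Db y (b y))) \<le> \<eta> * (s\<^sup>2 + t\<^sup>2)"
proof -
  define Ga where "Ga z = Da z (a z)" for z
  define Gb where "Gb z = Db z (b z)" for z
  have \<eta>8: "\<eta>/8 > 0" using \<open>\<eta> > 0\<close> by simp
  obtain rA TA where rA: "rA > 0" "TA > 0" and EA: "\<forall>y\<in>cball c rA. \<forall>t. \<bar>t\<bar> \<le> TA \<longrightarrow>
      norm (A t y - y - t *\<^sub>R a y - (t\<^sup>2/2) *\<^sub>R Ga y) \<le> \<eta>/8 * t\<^sup>2"
    using flow_taylor2[OF A fa \<eta>8, where c=c] unfolding Ga_def by blast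
  obtain rB TB where rB: "rB > 0" "TB > 0" and EB: "\<forall>y\<in>cball c rB. \<forall>t. \<bar>t\<bar> \<le> TB \<longrightarrow>
      norm (B t y - y - t *\<^sub>R b y - (t\<^sup>2/2) *\<^sub>R Gb y) \<le> \<eta>/8 * t\<^sup>2"
    using flow_taylor2[OF B fb \<eta>8, where c=c] unfolding Gb_def by blast
  obtain rL TL M K where rL: "rL > 0" "TL > 0" "M > 0" "K \<ge> 1"
    and SA: "\<forall>y\<in>cball c rL. \<forall>t. \<bar>t\<bar> \<le> TL \<longrightarrow> norm (A t y - y) \<le> M * \<bar>t\<bar>"
    and "\<forall>a\<in>cball c rL. \<forall>b\<in>cball c rL. \<forall>t. \<bar>t\<bar> \<le> TL \<longrightarrow> norm (A t a - A t b) \<le> K * norm (a - b)"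
    by (rule flow_local_bounds[OF A fa, where c=c])
  have "\<eta> / (2 * M) > 0" using \<open>\<eta> > 0\<close> rL by simp
  then obtain rl where rl: "rl > 0" and LZ: "\<forall>p\<in>cball c rl. \<forall>q\<in>cball c rl.
      norm (b p - b q - Db q (p - q)) \<le> \<eta> / (2 * M) * norm (p - q)"
    using C1_field_uniform_linearization[OF fb, where c=c] by blast
  obtain rG where rG: "rG > 0" and GC: "\<forall>z\<in>cball c rG. norm (Gb z - Gb c) \<le> \<eta>/8"
    using C1_field_acceleration_continuous[OF fb \<eta>8, where c=c] unfolding Gb_def by blast
  obtain rGa where rGa: "rGa > 0" and GCa: "\<forall>z\<in>cball c rGa. norm (Ga z - Ga c) \<le> 1"
    using C1_field_acceleration_continuous[OF fa zero_less_one, where c=c] unfolding Ga_def by blast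
  obtain rD Kb where rD: "rD > 0" "Kb \<ge> 0" and DB: "\<And>x h. x \<in> cball c rD \<Longrightarrow> norm (Db x h) \<le> Kb * norm h"
    using C1_field_derivative_locally_bounded[OF fb, where c=c] by blast
  define Ca where "Ca = norm (Ga c) + 1"
  define C where "C = Kb * (Ca/2 + \<eta>/8) + 1"
  define \<rho> where "\<rho> = min (min rA rB) (min (min rL rl) (min rG (min rGa rD)))"
  define T where "T = min (min TA TB) (min TL (min (\<rho> / (2 * M)) (\<eta> / (8 * C))))"
  have C: "C > 0" using rD \<open>\<eta> > 0\<close> by (simp add: C_def Ca_def add_nonneg_pos)
  have \<rho>: "\<rho> > 0" using rA rB rL rl rG rGa rD by (simp add: \<rho>_def)
  have T: "T > 0" using rA rB rL \<rho> C \<open>\<eta> > 0\<close> by (simp add: T_def)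
  have \<rho>_le: "\<rho> \<le> rA" "\<rho> \<le> rB" "\<rho> \<le> rL" "\<rho> \<le> rl" "\<rho> \<le> rG" "\<rho> \<le> rGa" "\<rho> \<le> rD"
    by (simp_all add: \<rho>_def)
  have T_le: "T \<le> TA" "T \<le> TB" "T \<le> TL" "T \<le> \<rho> / (2 * M)" "T \<le> \<eta> / (8 * C)"
    by (simp_all add: T_def)
  have main: "norm (B s (A t y) - (y + t *\<^sub>R a y + (t\<^sup>2/2) *\<^sub>R Ga y + s *\<^sub>R b y + (s * t) *\<^sub>R Db y (a y)
       + (s\<^sup>2/2) *\<^sub>R Gb y)) \<le> \<eta> * (s\<^sup>2 + t\<^sup>2)"
    if y: "y \<in> cball c (\<rho>/2)" and s: "\<bar>s\<bar> \<le> T" and t: "\<bar>t\<bar> \<le> T" for y s t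
  proof (rule second_order_composition[OF C1_field_linear[OF fb] \<open>Kb \<ge> 0\<close> _ _ _ _ _ _ _ \<open>\<eta> > 0\<close>])
    have yr: "y \<in> cball c \<rho>" using y \<rho> by auto
    have zy: "norm (A t y - y) \<le> M * \<bar>t\<bar>" using SA yr t \<rho>_le T_le by auto
    also have "M * \<bar>t\<bar> \<le> M * (\<rho> / (2 * M))" using t rL T_le by (intro mult_left_mono) auto
    finally have "dist y (A t y) \<le> \<rho>/2" using rL by (simp add: dist_norm norm_minus_commute)
    then have zr: "A t y \<in> cball c \<rho>" using y dist_triangle[of c "A t y" y] by simp
    show "norm (Db y h) \<le> Kb * norm h" for h using DB yr \<rho>_le by auto
    show "norm (B s (A t y) - A t y - s *\<^sub>R b (A t y) - (s\<^sup>2/2) *\<^sub>R Gb (A t y)) \<le> \<eta>/8 * s\<^sup>2"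
      using EB zr s \<rho>_le T_le by auto
    show "norm (A t y - y - t *\<^sub>R a y - (t\<^sup>2/2) *\<^sub>R Ga y) \<le> \<eta>/8 * t\<^sup>2"
      using EA yr t \<rho>_le T_le by auto
    have "norm (b (A t y) - b y - Db y (A t y - y)) \<le> \<eta> / (2 * M) * norm (A t y - y)"
      using LZ zr yr \<rho>_le by auto
    also have "\<dots> \<le> \<eta> / (2 * M) * (M * \<bar>t\<bar>)" using zy \<open>\<eta> > 0\<close> rL by (intro mult_left_mono) auto
    finally show "norm (b (A t y) - b y - Db y (A t y - y)) \<le> \<eta>/2 * \<bar>t\<bar>" using rL by simp
    have "norm (Gb (A t y) - Gb c) \<le> \<eta>/8" "norm (Gb y - Gb c) \<le> \<eta>/8"
      using GC zr yr \<rho>_le by auto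
    then show "norm (Gb (A t y) - Gb y) \<le> \<eta>/4"
      using norm_triangle_ineq4[of "Gb (A t y) - Gb c" "Gb y - Gb c"] by simp
    have "norm (Ga y - Ga c) \<le> 1" using GCa yr \<rho>_le by auto
    then show "norm (Ga y) \<le> Ca" using norm_triangle_sub[of "Ga y" "Ga c"] by (simp add: Ca_def)
    have "\<bar>s\<bar> * (Kb * (Ca/2 + \<eta>/8)) \<le> \<bar>s\<bar> * C" by (intro mult_left_mono) (auto simp: C_def)
    also have "\<dots> \<le> \<eta> / (8 * C) * C" using s C T_le by (intro mult_right_mono) auto
    finally show "\<bar>s\<bar> * (Kb * (Ca/2 + \<eta>/8)) \<le> \<eta>/8" using C by simp
  qed
  show ?thesis
  proof (rule that[of "\<rho>/2" T])
    show "\<forall>y\<in>cball c (\<rho>/2). \<forall>s t. \<bar>s\<bar> \<le> T \<and> \<bar>t\<bar> \<le> T \<longrightarrow>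
      norm (B s (A t y) - (y + t *\<^sub>R a y + (t\<^sup>2/2) *\<^sub>R Da y (a y) + s *\<^sub>R b y + (s * t) *\<^sub>R Db y (a y)
       + (s\<^sup>2/2) *\<^sub>R Db y (b y))) \<le> \<eta> * (s\<^sup>2 + t\<^sup>2)"
      using main unfolding Ga_def Gb_def by blast
  qed (use \<rho> T in auto)
qed

lemma flow_commutator_estimate:
  fixes F E :: "real \<Rightarrow> 'a::{real_inner, perfect_space} \<Rightarrow> 'a"
  assumes F: "is_flow F V" and fV: "C1_field V DV" and E: "is_flow E W" and fW: "C1_field W DW"
    and "\<eta> > 0"
  obtains r T where "r > 0" "T > 0" "\<forall>y\<in>cball c r. \<forall>s t. \<bar>s\<bar> \<le> T \<and> \<bar>t\<bar> \<le> T \<longrightarrow>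
    norm (E s (F t y) - F t (E s y) - (s * t) *\<^sub>R (DW y (V y) - DV y (W y))) \<le> \<eta> * (s\<^sup>2 + t\<^sup>2)"
proof -
  have \<eta>2: "\<eta>/2 > 0" using \<open>\<eta> > 0\<close> by simp
  obtain r1 T1 where r1: "r1 > 0" "T1 > 0" and X1: "\<forall>y\<in>cball c r1. \<forall>s t. \<bar>s\<bar> \<le> T1 \<and> \<bar>t\<bar> \<le> T1 \<longrightarrow>
    norm (E s (F t y) - (y + t *\<^sub>R V y + (t\<^sup>2/2) *\<^sub>R DV y (V y) + s *\<^sub>R W y + (s * t) *\<^sub>R DW y (V y)
       + (s\<^sup>2/2) *\<^sub>R DW y (W y))) \<le> \<eta>/2 * (s\<^sup>2 + t\<^sup>2)"
    by (rule flow_composition_taylor2[OF F fV E fW \<eta>2])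
  obtain r2 T2 where r2: "r2 > 0" "T2 > 0" and X2: "\<forall>y\<in>cball c r2. \<forall>s t. \<bar>s\<bar> \<le> T2 \<and> \<bar>t\<bar> \<le> T2 \<longrightarrow>
    norm (F s (E t y) - (y + t *\<^sub>R W y + (t\<^sup>2/2) *\<^sub>R DW y (W y) + s *\<^sub>R V y + (s * t) *\<^sub>R DV y (W y)
       + (s\<^sup>2/2) *\<^sub>R DV y (V y))) \<le> \<eta>/2 * (s\<^sup>2 + t\<^sup>2)"
    by (rule flow_composition_taylor2[OF E fW F fV \<eta>2])
  have "norm (E s (F t y) - F t (E s y) - (s * t) *\<^sub>R (DW y (V y) - DV y (W y))) \<le> \<eta> * (s\<^sup>2 + t\<^sup>2)"
    if y: "y \<in> cball c (min r1 r2)" and st: "\<bar>s\<bar> \<le> min T1 T2" "\<bar>t\<bar> \<le> min T1 T2" for y s t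
  proof -
    define P1 where "P1 = y + t *\<^sub>R V y + (t\<^sup>2/2) *\<^sub>R DV y (V y) + s *\<^sub>R W y + (s * t) *\<^sub>R DW y (V y)
       + (s\<^sup>2/2) *\<^sub>R DW y (W y)"
    define P2 where "P2 = y + s *\<^sub>R W y + (s\<^sup>2/2) *\<^sub>R DW y (W y) + t *\<^sub>R V y + (t * s) *\<^sub>R DV y (W y)
       + (t\<^sup>2/2) *\<^sub>R DV y (V y)"
    have 1: "norm (E s (F t y) - P1) \<le> \<eta>/2 * (s\<^sup>2 + t\<^sup>2)" unfolding P1_def using X1 y st by simp
    have 2: "norm (F t (E s y) - P2) \<le> \<eta>/2 * (t\<^sup>2 + s\<^sup>2)" unfolding P2_def using X2 y st by simp
    have "E s (F t y) - F t (E s y) - (s * t) *\<^sub>R (DW y (V y) - DV y (W y))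
        = (E s (F t y) - P1) - (F t (E s y) - P2)"
      unfolding P1_def P2_def by (simp add: algebra_simps)
    then have "norm (E s (F t y) - F t (E s y) - (s * t) *\<^sub>R (DW y (V y) - DV y (W y)))
        \<le> norm (E s (F t y) - P1) + norm (F t (E s y) - P2)"
      by (metis norm_triangle_ineq4)
    also have "\<dots> \<le> \<eta> * (s\<^sup>2 + t\<^sup>2)" using 1 2 by (simp add: algebra_simps)
    finally show ?thesis .
  qed
  then show ?thesis using that[of "min r1 r2" "min T1 T2"] r1 r2 by auto
qed

text \<open>Dividing the commutator estimate by \<open>s t\<close> and letting \<open>s = t \<rightarrow> 0\<close>.\<close>
lemma commuting_flows_bracket:
  fixes F E :: "real \<Rightarrow> 'a::{real_inner, perfect_space} \<Rightarrow> 'a"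
  assumes F: "is_flow F V" and fV: "C1_field V DV" and E: "is_flow E W" and fW: "C1_field W DW"
    and commute: "\<And>s t y. E s (F t y) = F t (E s y)"
  shows "DW c (V c) = DV c (W c)"
proof -
  have "norm (DW c (V c) - DV c (W c)) \<le> \<eta>" if "\<eta> > 0" for \<eta>
  proof -
    have "\<eta>/2 > 0" using that by simp
    then obtain r T where rT: "r > 0" "T > 0" and X: "\<forall>y\<in>cball c r. \<forall>s t. \<bar>s\<bar> \<le> T \<and> \<bar>t\<bar> \<le> T \<longrightarrow>
      norm (E s (F t y) - F t (E s y) - (s * t) *\<^sub>R (DW y (V y) - DV y (W y))) \<le> \<eta>/2 * (s\<^sup>2 + t\<^sup>2)"
      using flow_commutator_estimate[OF F fV E fW, where c=c] by blast
    have "norm (E T (F T c) - F T (E T c) - (T * T) *\<^sub>R (DW c (V c) - DV c (W c)))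
        \<le> \<eta>/2 * (T\<^sup>2 + T\<^sup>2)"
      using X[rule_format, of c T T] rT by simp
    then have "norm ((T * T) *\<^sub>R (DW c (V c) - DV c (W c))) \<le> \<eta>/2 * (T\<^sup>2 + T\<^sup>2)"
      using commute by (simp add: norm_minus_commute)
    then have "T\<^sup>2 * norm (DW c (V c) - DV c (W c)) \<le> T\<^sup>2 * \<eta>"
      by (simp add: power2_eq_square mult.commute)
    then show ?thesis using rT by (simp add: power2_eq_square)
  qed
  then have "norm (DW c (V c) - DV c (W c)) \<le> 0" by (metis field_le_epsilon add_0)
  then show ?thesis by simp
qed

section \<open>Vanishing bracket implies commuting flows\<close>

text \<open>Telescoping along the orbit of \<open>A\<close>: \<open>k\<close> steps of size \<open>h\<close>, each commutator defect \<open>D\<close> being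
  transported by \<open>A\<close> with Lipschitz constant \<open>K\<close>.\<close>
lemma flow_commutator_telescope:
  fixes A B :: "real \<Rightarrow> 'a::real_normed_vector \<Rightarrow> 'a"
  assumes A_add: "\<And>x y p. A (x + y) p = A x (A y p)" and A_zero: "\<And>p. A 0 p = p"
    and bA: "\<forall>y\<in>cball c R. \<forall>\<sigma>. \<bar>\<sigma>\<bar> \<le> T \<longrightarrow> norm (A \<sigma> y - y) \<le> M * \<bar>\<sigma>\<bar>"
    and bB: "\<forall>y\<in>cball c R. \<forall>\<sigma>. \<bar>\<sigma>\<bar> \<le> T \<longrightarrow> norm (B \<sigma> y - y) \<le> M * \<bar>\<sigma>\<bar>"
    and lA: "\<forall>a\<in>cball c R. \<forall>b\<in>cball c R. \<forall>\<sigma>. \<bar>\<sigma>\<bar> \<le> T \<longrightarrow> norm (A \<sigma> a - A \<sigma> b) \<le> K * norm (a - b)"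
    and K: "K \<ge> 0" and M: "M \<ge> 0"
    and t: "\<bar>t\<bar> \<le> T" and rho: "\<rho> + 2 * M * T \<le> R"
    and D: "\<forall>y\<in>cball c \<rho>. norm (B t (A h y) - A h (B t y)) \<le> D"
  shows "\<bar>real k * h\<bar> \<le> T \<Longrightarrow> y \<in> cball c (\<rho> - M * real k * \<bar>h\<bar>) \<Longrightarrow>
     norm (B t (A (real k * h) y) - A (real k * h) (B t y)) \<le> real k * K * D"
proof (induction k arbitrary: y)
  case 0
  then show ?case using A_zero by simp
next
  case (Suc k)
  have hT: "\<bar>h\<bar> \<le> T"
  proof -
    have "\<bar>h\<bar> \<le> \<bar>real (Suc k) * h\<bar>" using mult_right_mono[of 1 "1 + real k" "\<bar>h\<bar>"] by (simp add: abs_mult)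
    then show ?thesis using Suc.prems(1) by linarith
  qed
  have kT: "\<bar>real k * h\<bar> \<le> T"
  proof -
    have "\<bar>real k * h\<bar> \<le> \<bar>real (Suc k) * h\<bar>" by (simp add: abs_mult mult_right_mono)
    then show ?thesis using Suc.prems(1) by linarith
  qed
  have Mh: "M * \<bar>h\<bar> \<le> M * T" "M * \<bar>t\<bar> \<le> M * T" using hT t M by (auto intro: mult_left_mono)
  have yc: "dist c y \<le> \<rho> - M * real k * \<bar>h\<bar> - M * \<bar>h\<bar>" using Suc.prems(2) by (simp add: algebra_simps)
  have "M * real k * \<bar>h\<bar> \<ge> 0" using M by simp
  then have yc2: "dist c y \<le> \<rho>" using yc M by (smt (verit) abs_ge_zero mult_nonneg_nonneg)
  have T0: "T \<ge> 0" using t by linarith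
  have MT: "M * T \<ge> 0" using M T0 by simp
  have yR: "y \<in> cball c R" using yc2 rho MT by simp
  define y' where "y' = A h y"
  have "norm (y' - y) \<le> M * \<bar>h\<bar>" unfolding y'_def using bA yR hT by blast
  then have y'c: "dist c y' \<le> \<rho> - M * real k * \<bar>h\<bar>" using yc dist_triangle[of c y' y]
    by (simp add: dist_norm norm_minus_commute)
  have IH: "norm (B t (A (real k * h) y') - A (real k * h) (B t y')) \<le> real k * K * D"
    using Suc.IH[OF kT] y'c by simp
  define a where "a = B t (A h y)"
  define b where "b = A h (B t y)"
  have y'R: "y' \<in> cball c R" using y'c rho MT \<open>M * real k * \<bar>h\<bar> \<ge> 0\<close> by simp
  have "norm (a - y') \<le> M * \<bar>t\<bar>" unfolding a_def y'_def[symmetric] using bB y'R t by blast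
  then have "dist c a \<le> R" using y'c dist_triangle[of c a y'] Mh rho MT \<open>M * real k * \<bar>h\<bar> \<ge> 0\<close>
    by (simp add: dist_norm norm_minus_commute)
  then have aR: "a \<in> cball c R" by simp
  have "norm (B t y - y) \<le> M * \<bar>t\<bar>" using bB yR t by blast
  then have ty: "dist c (B t y) \<le> \<rho> + M * T" using yc2 dist_triangle[of c "B t y" y] Mh
    by (simp add: dist_norm norm_minus_commute)
  then have tyR: "B t y \<in> cball c R" using rho MT by simp
  have "norm (b - B t y) \<le> M * \<bar>h\<bar>" unfolding b_def using bA tyR hT by blast
  then have "dist c b \<le> R" using ty dist_triangle[of c b "B t y"] Mh rho MT
    by (simp add: dist_norm norm_minus_commute)
  then have bR: "b \<in> cball c R" by simp
  have L2: "norm (A (real k * h) a - A (real k * h) b) \<le> K * norm (a - b)" using lA aR bR kT by blast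
  have Dy: "norm (a - b) \<le> D" unfolding a_def b_def using D yc2 by simp
  have eq1: "A (real (Suc k) * h) y = A (real k * h) y'" unfolding y'_def
    using A_add[of "real k * h" h y] by (simp add: algebra_simps)
  have eq2: "A (real (Suc k) * h) (B t y) = A (real k * h) b" unfolding b_def
    using A_add[of "real k * h" h "B t y"] by (simp add: algebra_simps)
  have "B t (A (real (Suc k) * h) y) - A (real (Suc k) * h) (B t y)
      = (B t (A (real k * h) y') - A (real k * h) (B t y')) + (A (real k * h) a - A (real k * h) b)"
    unfolding eq1 eq2 a_def y'_def by simp
  then have "norm (B t (A (real (Suc k) * h) y) - A (real (Suc k) * h) (B t y))
      \<le> norm (B t (A (real k * h) y') - A (real k * h) (B t y')) + norm (A (real k * h) a - A (real k * h) b)"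
    by (simp add: norm_triangle_ineq)
  also have "\<dots> \<le> real k * K * D + K * D" using IH L2 Dy K by (smt (verit) mult_left_mono)
  also have "\<dots> = real (Suc k) * K * D" by (simp add: algebra_simps)
  finally show ?case .
qed

text \<open>Splitting \<open>[0, s] \<times> [0, t]\<close> into \<open>N\<^sup>2\<close> cells of sides \<open>s/N\<close>, \<open>t/N\<close>, each with commutator defect
  \<open>O(\<eta>/N\<^sup>2)\<close>, and telescoping twice bounds the commutator by \<open>K\<^sup>2 (s\<^sup>2 + t\<^sup>2) \<eta>\<close>.\<close>
lemma flow_commutator_subdivision:
  fixes F E :: "real \<Rightarrow> 'a::real_normed_vector \<Rightarrow> 'a"
  assumes F_add: "\<And>s t y. F (s + t) y = F s (F t y)" and F_zero: "\<And>y. F 0 y = y"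
    and E_add: "\<And>s t y. E (s + t) y = E s (E t y)" and E_zero: "\<And>y. E 0 y = y"
    and bF: "\<forall>y\<in>cball c R. \<forall>\<sigma>. \<bar>\<sigma>\<bar> \<le> T \<longrightarrow> norm (F \<sigma> y - y) \<le> M * \<bar>\<sigma>\<bar>"
    and bE: "\<forall>y\<in>cball c R. \<forall>\<sigma>. \<bar>\<sigma>\<bar> \<le> T \<longrightarrow> norm (E \<sigma> y - y) \<le> M * \<bar>\<sigma>\<bar>"
    and lF: "\<forall>a\<in>cball c R. \<forall>b\<in>cball c R. \<forall>\<sigma>. \<bar>\<sigma>\<bar> \<le> T \<longrightarrow> norm (F \<sigma> a - F \<sigma> b) \<le> K * norm (a - b)"
    and lE: "\<forall>a\<in>cball c R. \<forall>b\<in>cball c R. \<forall>\<sigma>. \<bar>\<sigma>\<bar> \<le> T \<longrightarrow> norm (E \<sigma> a - E \<sigma> b) \<le> K * norm (a - b)"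
    and K0: "K \<ge> 0" "M \<ge> 0" and MT: "M * T \<le> R / 8"
    and T': "T' > 0" and U: "\<forall>y\<in>cball c (R/2). \<forall>s t. \<bar>s\<bar> \<le> T' \<and> \<bar>t\<bar> \<le> T' \<longrightarrow>
      norm (E s (F t y) - F t (E s y)) \<le> \<eta> * (s\<^sup>2 + t\<^sup>2)"
    and y: "y \<in> cball c (R/4)" and s: "\<bar>s\<bar> \<le> T" and t: "\<bar>t\<bar> \<le> T"
  shows "norm (E t (F s y) - F s (E t y)) \<le> K\<^sup>2 * (s\<^sup>2 + t\<^sup>2) * \<eta>"
proof -
  define \<rho> where "\<rho> = R / 2"
  obtain n :: nat where n: "(\<bar>s\<bar> + \<bar>t\<bar>) / T' < real n" using reals_Archimedean2 by blast
  define N where "N = Suc n"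
  have N: "real N \<ge> 1" "real N > 0" by (auto simp: N_def)
  have Nb: "(\<bar>s\<bar> + \<bar>t\<bar>) / T' < real N" using n by (simp add: N_def)
  define h where "h = s / real N"
  define h' where "h' = t / real N"
  have hs: "real N * h = s" "real N * h' = t" using N by (auto simp: h_def h'_def)
  have "\<bar>s\<bar> + \<bar>t\<bar> < real N * T'" using Nb T' by (simp add: divide_less_eq mult.commute)
  then have hT': "\<bar>h\<bar> \<le> T'" "\<bar>h'\<bar> \<le> T'"
    using N by (auto simp: h_def h'_def abs_divide divide_le_eq mult.commute)
  have "\<bar>h'\<bar> \<le> \<bar>t\<bar>" using N by (simp add: h'_def abs_divide divide_le_eq mult_le_cancel_right1
        mult.commute[of "\<bar>t\<bar>"] mult_left_mono)
  then have h'T: "\<bar>h'\<bar> \<le> T" using t by simp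
  define D where "D = \<eta> * (h\<^sup>2 + h'\<^sup>2)"
  have D1: "\<forall>y\<in>cball c \<rho>. norm (E h' (F h y) - F h (E h' y)) \<le> D"
    using U hT' unfolding D_def \<rho>_def by (simp add: add.commute)
  have MT2: "2 * M * T = 2 * (M * T)" by simp
  have "0 \<le> T" using s by linarith
  then have MT0: "0 \<le> M * T" using K0(2) by simp
  have rho1: "\<rho> + 2 * M * T \<le> R" using MT MT0 MT2 unfolding \<rho>_def by linarith
  have G1: "\<bar>real N * h\<bar> \<le> T \<Longrightarrow> z \<in> cball c (\<rho> - M * real N * \<bar>h\<bar>) \<Longrightarrow>
      norm (E h' (F (real N * h) z) - F (real N * h) (E h' z)) \<le> real N * K * D" for z
    using flow_commutator_telescope[where A=F and B=E and c=c and R=R and T=T and M=M and K=K and t=h' and \<rho>=\<rho> and h=h and D=D,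
        OF F_add F_zero bF bE lF K0 h'T rho1 D1] .
  have as: "\<bar>s\<bar> = real N * \<bar>h\<bar>" unfolding hs(1)[symmetric] by (simp add: abs_mult)
  have MNh: "M * real N * \<bar>h\<bar> = M * \<bar>s\<bar>" by (simp add: as mult.assoc)
  have Ms: "M * \<bar>s\<bar> \<le> M * T" "M * \<bar>t\<bar> \<le> M * T" using s t K0 by (auto intro: mult_left_mono)
  have D2: "\<forall>z\<in>cball c (\<rho> - M * T). norm (F s (E h' z) - E h' (F s z)) \<le> real N * K * D"
  proof
    fix z assume "z \<in> cball c (\<rho> - M * T)"
    then have "dist c z \<le> \<rho> - M * T" by simp
    then have "z \<in> cball c (\<rho> - M * real N * \<bar>h\<bar>)" unfolding mem_cball MNh using Ms by linarith
    then have "norm (E h' (F s z) - F s (E h' z)) \<le> real N * K * D" using G1 hs s by simp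
    then show "norm (F s (E h' z) - E h' (F s z)) \<le> real N * K * D" by (simp add: norm_minus_commute)
  qed
  have rho2: "(\<rho> - M * T) + 2 * M * T \<le> R" using MT MT0 MT2 unfolding \<rho>_def by linarith
  have G2: "\<bar>real N * h'\<bar> \<le> T \<Longrightarrow> z \<in> cball c ((\<rho> - M * T) - M * real N * \<bar>h'\<bar>) \<Longrightarrow>
      norm (F s (E (real N * h') z) - E (real N * h') (F s z)) \<le> real N * K * (real N * K * D)" for z
    using flow_commutator_telescope[where A=E and B=F and c=c and R=R and T=T and M=M and K=K and t=s and \<rho>="\<rho> - M * T" and h=h' and D="real N * K * D",
        OF E_add E_zero bE bF lE K0 s rho2 D2] .
  have at: "\<bar>t\<bar> = real N * \<bar>h'\<bar>" unfolding hs(2)[symmetric] by (simp add: abs_mult)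
  have MNh': "M * real N * \<bar>h'\<bar> = M * \<bar>t\<bar>" by (simp add: at mult.assoc)
  have "dist c y \<le> R/4" using y by simp
  then have "y \<in> cball c ((\<rho> - M * T) - M * real N * \<bar>h'\<bar>)" unfolding mem_cball MNh' using Ms MT MT0 unfolding \<rho>_def by linarith
  then have "norm (F s (E t y) - E t (F s y)) \<le> real N * K * (real N * K * D)" using G2 hs t by simp
  also have "real N * K * (real N * K * D) = K\<^sup>2 * (s\<^sup>2 + t\<^sup>2) * \<eta>"
    unfolding D_def h_def h'_def using N by (simp add: field_simps power2_eq_square)
  finally show ?thesis by (simp add: norm_minus_commute)
qed

lemma flows_common_local_bounds:
  fixes F E :: "real \<Rightarrow> 'a::{real_inner, perfect_space} \<Rightarrow> 'a"
  assumes F: "is_flow F V" and fV: "C1_field V DV" and E: "is_flow E W" and fW: "C1_field W DW"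
  obtains R T M K where "R > 0" "T > 0" "M > 0" "K \<ge> 1" "M * T \<le> R / 8"
    "\<forall>y\<in>cball c R. \<forall>\<sigma>. \<bar>\<sigma>\<bar> \<le> T \<longrightarrow> norm (F \<sigma> y - y) \<le> M * \<bar>\<sigma>\<bar>"
    "\<forall>y\<in>cball c R. \<forall>\<sigma>. \<bar>\<sigma>\<bar> \<le> T \<longrightarrow> norm (E \<sigma> y - y) \<le> M * \<bar>\<sigma>\<bar>"
    "\<forall>a\<in>cball c R. \<forall>b\<in>cball c R. \<forall>\<sigma>. \<bar>\<sigma>\<bar> \<le> T \<longrightarrow> norm (F \<sigma> a - F \<sigma> b) \<le> K * norm (a - b)"
    "\<forall>a\<in>cball c R. \<forall>b\<in>cball c R. \<forall>\<sigma>. \<bar>\<sigma>\<bar> \<le> T \<longrightarrow> norm (E \<sigma> a - E \<sigma> b) \<le> K * norm (a - b)"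
proof -
  obtain rF TF MF KF where hF: "rF > 0" "TF > 0" "MF > 0" "KF \<ge> 1"
    and bF: "\<forall>y\<in>cball c rF. \<forall>\<sigma>. \<bar>\<sigma>\<bar> \<le> TF \<longrightarrow> norm (F \<sigma> y - y) \<le> MF * \<bar>\<sigma>\<bar>"
    and lF: "\<forall>a\<in>cball c rF. \<forall>b\<in>cball c rF. \<forall>\<sigma>. \<bar>\<sigma>\<bar> \<le> TF \<longrightarrow> norm (F \<sigma> a - F \<sigma> b) \<le> KF * norm (a - b)"
    by (rule flow_local_bounds[OF F fV, where c=c])
  obtain rE TE ME KE where hE: "rE > 0" "TE > 0" "ME > 0" "KE \<ge> 1"
    and bE: "\<forall>y\<in>cball c rE. \<forall>\<sigma>. \<bar>\<sigma>\<bar> \<le> TE \<longrightarrow> norm (E \<sigma> y - y) \<le> ME * \<bar>\<sigma>\<bar>"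
    and lE: "\<forall>a\<in>cball c rE. \<forall>b\<in>cball c rE. \<forall>\<sigma>. \<bar>\<sigma>\<bar> \<le> TE \<longrightarrow> norm (E \<sigma> a - E \<sigma> b) \<le> KE * norm (a - b)"
    by (rule flow_local_bounds[OF E fW, where c=c])
  define R where "R = min rF rE"
  define M where "M = max MF ME"
  define K where "K = max KF KE"
  define T where "T = min (min TF TE) (R / (8 * M))"
  have R: "R > 0" "R \<le> rF" "R \<le> rE" using hF hE by (auto simp: R_def)
  have M: "M > 0" "MF \<le> M" "ME \<le> M" using hF by (auto simp: M_def)
  have K: "K \<ge> 1" "KF \<le> K" "KE \<le> K" using hF by (auto simp: K_def)
  have T: "T > 0" "T \<le> TF" "T \<le> TE" "T \<le> R / (8 * M)" using hF hE R M by (auto simp: T_def)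
  have "M * T \<le> M * (R / (8 * M))" using M T by (intro mult_left_mono) auto
  then have MT: "M * T \<le> R / 8" using M by simp
  have displacement: "norm (G \<sigma> y - y) \<le> M * \<bar>\<sigma>\<bar>"
    if "\<forall>y\<in>cball c r. \<forall>\<sigma>. \<bar>\<sigma>\<bar> \<le> T0 \<longrightarrow> norm (G \<sigma> y - y) \<le> M0 * \<bar>\<sigma>\<bar>"
      "R \<le> r" "T \<le> T0" "M0 \<le> M" "y \<in> cball c R" "\<bar>\<sigma>\<bar> \<le> T" for G r T0 M0 y \<sigma>
  proof -
    have "norm (G \<sigma> y - y) \<le> M0 * \<bar>\<sigma>\<bar>" using that by auto
    also have "\<dots> \<le> M * \<bar>\<sigma>\<bar>" using that(4) by (rule mult_right_mono) simp
    finally show ?thesis .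
  qed
  have lipschitz: "norm (G \<sigma> a - G \<sigma> b) \<le> K * norm (a - b)"
    if "\<forall>a\<in>cball c r. \<forall>b\<in>cball c r. \<forall>\<sigma>. \<bar>\<sigma>\<bar> \<le> T0 \<longrightarrow> norm (G \<sigma> a - G \<sigma> b) \<le> K0 * norm (a - b)"
      "R \<le> r" "T \<le> T0" "K0 \<le> K" "a \<in> cball c R" "b \<in> cball c R" "\<bar>\<sigma>\<bar> \<le> T" for G r T0 K0 a b \<sigma>
  proof -
    have "norm (G \<sigma> a - G \<sigma> b) \<le> K0 * norm (a - b)" using that by auto
    also have "\<dots> \<le> K * norm (a - b)" using that(4) by (rule mult_right_mono) simp
    finally show ?thesis .
  qed
  show ?thesis
    by (rule that[OF R(1) T(1) M(1) K(1) MT])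
      (use displacement[OF bF R(2) T(2) M(2)] displacement[OF bE R(3) T(3) M(3)]
        lipschitz[OF lF R(2) T(2) K(2)] lipschitz[OF lE R(3) T(3) K(3)] in blast)+
qed

lemma bracket_zero_commutator_uniformly_small:
  fixes F E :: "real \<Rightarrow> 'a::euclidean_space \<Rightarrow> 'a"
  assumes F: "is_flow F V" and fV: "C1_field V DV" and E: "is_flow E W" and fW: "C1_field W DW"
    and bracket: "\<And>y. DW y (V y) = DV y (W y)" and "compact S" and "\<eta> > 0"
  obtains T where "T > 0"
    "\<forall>y\<in>S. \<forall>s t. \<bar>s\<bar> \<le> T \<and> \<bar>t\<bar> \<le> T \<longrightarrow> norm (E s (F t y) - F t (E s y)) \<le> \<eta> * (s\<^sup>2 + t\<^sup>2)"
proof -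
  have "\<exists>T>0. \<forall>y\<in>S. \<forall>s t. \<bar>s\<bar> \<le> T \<and> \<bar>t\<bar> \<le> T \<longrightarrow> norm (E s (F t y) - F t (E s y)) \<le> \<eta> * (s\<^sup>2 + t\<^sup>2)"
  proof (rule compact_uniform_parameter[OF \<open>compact S\<close>])
    show "\<forall>p\<in>S. \<exists>r>0. \<exists>T>0. \<forall>y\<in>cball p r. \<forall>s t. \<bar>s\<bar> \<le> T \<and> \<bar>t\<bar> \<le> T \<longrightarrow>
      norm (E s (F t y) - F t (E s y)) \<le> \<eta> * (s\<^sup>2 + t\<^sup>2)"
    proof
      fix p
      obtain r T where "r > 0" "T > 0" and "\<forall>y\<in>cball p r. \<forall>s t. \<bar>s\<bar> \<le> T \<and> \<bar>t\<bar> \<le> T \<longrightarrow>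
        norm (E s (F t y) - F t (E s y) - (s * t) *\<^sub>R (DW y (V y) - DV y (W y))) \<le> \<eta> * (s\<^sup>2 + t\<^sup>2)"
        by (rule flow_commutator_estimate[OF F fV E fW \<open>\<eta> > 0\<close>, where c=p])
      then show "\<exists>r>0. \<exists>T>0. \<forall>y\<in>cball p r. \<forall>s t. \<bar>s\<bar> \<le> T \<and> \<bar>t\<bar> \<le> T \<longrightarrow>
        norm (E s (F t y) - F t (E s y)) \<le> \<eta> * (s\<^sup>2 + t\<^sup>2)" using bracket by auto
    qed
  qed auto
  then show ?thesis using that by blast
qed

lemma bracket_zero_local_commute:
  fixes F E :: "real \<Rightarrow> 'a::euclidean_space \<Rightarrow> 'a"
  assumes F: "is_flow F V" and fV: "C1_field V DV" and E: "is_flow E W" and fW: "C1_field W DW"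
    and bracket: "\<And>y. DW y (V y) = DV y (W y)"
  obtains r T where "r > 0" "T > 0"
    "\<forall>y\<in>cball c r. \<forall>s t. \<bar>s\<bar> \<le> T \<and> \<bar>t\<bar> \<le> T \<longrightarrow> E t (F s y) = F s (E t y)"
proof -
  obtain R T M K where R: "R > 0" "T > 0" "M > 0" "K \<ge> 1" "M * T \<le> R / 8"
    and bounds: "\<forall>y\<in>cball c R. \<forall>\<sigma>. \<bar>\<sigma>\<bar> \<le> T \<longrightarrow> norm (F \<sigma> y - y) \<le> M * \<bar>\<sigma>\<bar>"
      "\<forall>y\<in>cball c R. \<forall>\<sigma>. \<bar>\<sigma>\<bar> \<le> T \<longrightarrow> norm (E \<sigma> y - y) \<le> M * \<bar>\<sigma>\<bar>"
      "\<forall>a\<in>cball c R. \<forall>b\<in>cball c R. \<forall>\<sigma>. \<bar>\<sigma>\<bar> \<le> T \<longrightarrow> norm (F \<sigma> a - F \<sigma> b) \<le> K * norm (a - b)"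
      "\<forall>a\<in>cball c R. \<forall>b\<in>cball c R. \<forall>\<sigma>. \<bar>\<sigma>\<bar> \<le> T \<longrightarrow> norm (E \<sigma> a - E \<sigma> b) \<le> K * norm (a - b)"
    by (rule flows_common_local_bounds[OF F fV E fW, where c=c])
  have small: "norm (E t (F s y) - F s (E t y)) \<le> K\<^sup>2 * (s\<^sup>2 + t\<^sup>2) * \<eta>"
    if "y \<in> cball c (R/4)" "\<bar>s\<bar> \<le> T" "\<bar>t\<bar> \<le> T" "\<eta> > 0" for y s t \<eta>
  proof -
    obtain T' where "T' > 0" "\<forall>y\<in>cball c (R/2). \<forall>s t. \<bar>s\<bar> \<le> T' \<and> \<bar>t\<bar> \<le> T' \<longrightarrow>
        norm (E s (F t y) - F t (E s y)) \<le> \<eta> * (s\<^sup>2 + t\<^sup>2)"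
      using bracket_zero_commutator_uniformly_small[OF F fV E fW bracket compact_cball \<open>\<eta> > 0\<close>] by blast
    from flow_commutator_subdivision[OF is_flow_add[OF F] is_flow_zero[OF F] is_flow_add[OF E]
        is_flow_zero[OF E] bounds _ _ R(5) this that(1-3)] R
    show ?thesis by simp
  qed
  have "E t (F s y) = F s (E t y)" if "y \<in> cball c (R/4)" "\<bar>s\<bar> \<le> T" "\<bar>t\<bar> \<le> T" for y s t
  proof -
    define Q where "Q = K\<^sup>2 * (s\<^sup>2 + t\<^sup>2) + 1"
    have Q: "Q > 0" unfolding Q_def by (simp add: add_nonneg_pos)
    have "norm (E t (F s y) - F s (E t y)) \<le> 0 + e" if "e > 0" for e
    proof -
      have "norm (E t (F s y) - F s (E t y)) \<le> K\<^sup>2 * (s\<^sup>2 + t\<^sup>2) * (e / Q)"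
        using small[of y s t "e / Q"] \<open>y \<in> cball c (R/4)\<close> \<open>\<bar>s\<bar> \<le> T\<close> \<open>\<bar>t\<bar> \<le> T\<close> \<open>e > 0\<close> Q by simp
      also have "\<dots> \<le> Q * (e / Q)" using \<open>e > 0\<close> Q by (intro mult_right_mono) (auto simp: Q_def)
      finally show ?thesis using Q by simp
    qed
    then show ?thesis using field_le_epsilon[of "norm (E t (F s y) - F s (E t y))" 0] by simp
  qed
  then show ?thesis using that[of "R/4" T] R by auto
qed

lemma flow_continuous_nonneg_time:
  fixes F :: "real \<Rightarrow> 'a::{real_inner, perfect_space} \<Rightarrow> 'a"
  assumes F: "is_flow F V" and fV: "C1_field V DV" and s: "\<sigma> \<ge> 0"
  shows "continuous (at y) (F \<sigma>)"
proof (rule continuation_induct[where Q="\<lambda>\<sigma>. continuous (at y) (F \<sigma>)", OF _ s])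
  fix S :: real assume S: "S \<ge> 0" and hyp: "\<forall>\<sigma>. 0 \<le> \<sigma> \<and> \<sigma> < S \<longrightarrow> continuous (at y) (F \<sigma>)"
  obtain r T0 M K where hq: "r > 0" "T0 > 0" "M > 0" "K \<ge> 1"
    and "\<forall>z\<in>cball (F S y) r. \<forall>\<sigma>. \<bar>\<sigma>\<bar> \<le> T0 \<longrightarrow> norm (F \<sigma> z - z) \<le> M * \<bar>\<sigma>\<bar>"
    and lq: "\<forall>a\<in>cball (F S y) r. \<forall>b\<in>cball (F S y) r. \<forall>\<sigma>. \<bar>\<sigma>\<bar> \<le> T0 \<longrightarrow> norm (F \<sigma> a - F \<sigma> b) \<le> K * norm (a - b)"
    by (rule flow_local_bounds[OF F fV, where c="F S y"])
  obtain \<sigma>' where \<sigma>': "0 \<le> \<sigma>'" "\<sigma>' \<le> S" "S - T0/2 \<le> \<sigma>'" "\<sigma>' < S \<or> \<sigma>' = 0" "F \<sigma>' y \<in> ball (F S y) r"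
    by (rule continuous_at_earlier_point[OF is_flow_continuous[OF F, of S y] S hq(1) hq(2)])
  have c': "continuous (at y) (F \<sigma>')"
  proof (cases "\<sigma>' < S")
    case True then show ?thesis using hyp \<sigma>' by blast
  next
    case False
    then have "\<sigma>' = 0" using \<sigma>' by blast
    moreover have "F 0 = (\<lambda>x. x)" using is_flow_zero[OF F] by (simp add: fun_eq_iff)
    ultimately show ?thesis by simp
  qed
  have "continuous (at y) (F \<sigma>)" if "0 \<le> \<sigma>" "\<sigma> < S + T0/2" for \<sigma>
  proof (cases "\<sigma> < S")
    case True then show ?thesis using hyp that by blast
  next
    case False
    then have d: "\<bar>\<sigma> - \<sigma>'\<bar> \<le> T0" using \<sigma>' that by auto
    have L: "\<forall>a\<in>cball (F S y) r. \<forall>b\<in>cball (F S y) r. norm (F (\<sigma> - \<sigma>') a - F (\<sigma> - \<sigma>') b) \<le> K * norm (a - b)"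
      using lq d by blast
    have c2: "continuous (at (F \<sigma>' y)) (F (\<sigma> - \<sigma>'))" by (rule lipschitz_on_cball_continuous_at[OF L hq(4) \<sigma>'(5)])
    have "F \<sigma> = F (\<sigma> - \<sigma>') \<circ> F \<sigma>'"
      using is_flow_add[OF F, of "\<sigma> - \<sigma>'" \<sigma>'] by (simp add: fun_eq_iff)
    moreover have "continuous (at y) (F (\<sigma> - \<sigma>') \<circ> F \<sigma>')" using c' c2 by (rule continuous_at_compose)
    ultimately show ?thesis by simp
  qed
  then show "\<exists>e>0. \<forall>\<sigma>. 0 \<le> \<sigma> \<and> \<sigma> < S + e \<longrightarrow> continuous (at y) (F \<sigma>)"
    using hq(2) by (intro exI[of _ "T0/2"]) auto
qed

lemma bracket_zero_commute_near:
  fixes F E :: "real \<Rightarrow> 'a::euclidean_space \<Rightarrow> 'a"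
  assumes F: "is_flow F V" and fV: "C1_field V DV" and E: "is_flow E W" and fW: "C1_field W DW"
    and bracket: "\<And>y. DW y (V y) = DV y (W y)" and s: "s0 \<ge> 0"
  shows "\<exists>\<delta>>0. \<exists>r>0. \<forall>y\<in>ball p r. \<forall>t. \<bar>t\<bar> < \<delta> \<longrightarrow> E t (F s0 y) = F s0 (E t y)"
proof (rule continuation_induct[where Q="\<lambda>\<sigma>. \<exists>\<delta>>0. \<exists>r>0. \<forall>y\<in>ball p r. \<forall>t. \<bar>t\<bar> < \<delta> \<longrightarrow> E t (F \<sigma> y) = F \<sigma> (E t y)", OF _ s])
  fix S :: real assume S: "S \<ge> 0"
    and hyp: "\<forall>\<sigma>. 0 \<le> \<sigma> \<and> \<sigma> < S \<longrightarrow> (\<exists>\<delta>>0. \<exists>r>0. \<forall>y\<in>ball p r. \<forall>t. \<bar>t\<bar> < \<delta> \<longrightarrow> E t (F \<sigma> y) = F \<sigma> (E t y))"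
  define q where "q = F S p"
  obtain rq Tq where rq: "rq > 0" "Tq > 0" and LC: "\<forall>y\<in>cball q rq. \<forall>s t. \<bar>s\<bar> \<le> Tq \<and> \<bar>t\<bar> \<le> Tq \<longrightarrow> E t (F s y) = F s (E t y)"
    by (rule bracket_zero_local_commute[OF F fV E fW bracket, where c=q])
  obtain \<sigma>' where \<sigma>': "0 \<le> \<sigma>'" "\<sigma>' \<le> S" "S - Tq/2 \<le> \<sigma>'" "\<sigma>' < S \<or> \<sigma>' = 0" "F \<sigma>' p \<in> ball (F S p) rq"
    by (rule continuous_at_earlier_point[OF is_flow_continuous[OF F, of S p] S rq(1) rq(2)])
  have earlier: "\<exists>\<delta>>0. \<exists>r>0. \<forall>y\<in>ball p r. \<forall>t. \<bar>t\<bar> < \<delta> \<longrightarrow> E t (F \<sigma>' y) = F \<sigma>' (E t y)"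
  proof (cases "\<sigma>' < S")
    case True then show ?thesis using hyp \<sigma>' by blast
  next
    case False
    then have "\<sigma>' = 0" using \<sigma>' by blast
    then show ?thesis using is_flow_zero[OF F] by (intro exI[of _ 1] conjI ballI allI impI) auto
  qed
  then obtain \<delta>1 r1 where d1: "\<delta>1 > 0" "r1 > 0" and near: "\<forall>y\<in>ball p r1. \<forall>t. \<bar>t\<bar> < \<delta>1 \<longrightarrow> E t (F \<sigma>' y) = F \<sigma>' (E t y)"
    by blast
  have "continuous (at p) (F \<sigma>')" by (rule flow_continuous_nonneg_time[OF F fV \<sigma>'(1)])
  then obtain U where "open U" "p \<in> U" and U: "\<forall>y\<in>U. F \<sigma>' y \<in> ball q rq"
    using \<sigma>'(5) unfolding continuous_at_open q_def by (meson open_ball)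
  then obtain r2 where r2: "r2 > 0" "ball p r2 \<subseteq> U" by (meson openE)
  have inq: "F \<sigma>' y \<in> cball q rq" if "y \<in> ball p r2" for y
    using U r2(2) that by (meson ball_subset_cball subsetD)
  have ext: "\<exists>\<delta>>0. \<exists>r>0. \<forall>y\<in>ball p r. \<forall>t. \<bar>t\<bar> < \<delta> \<longrightarrow> E t (F \<sigma> y) = F \<sigma> (E t y)"
    if "0 \<le> \<sigma>" "\<sigma> < S + Tq/2" for \<sigma>
  proof (cases "\<sigma> < S")
    case True then show ?thesis using hyp that by blast
  next
    case False
    then have d: "\<bar>\<sigma> - \<sigma>'\<bar> \<le> Tq" using \<sigma>' that by auto
    have "E t (F \<sigma> y) = F \<sigma> (E t y)" if y: "y \<in> ball p (min r1 r2)" and t: "\<bar>t\<bar> < min \<delta>1 Tq" for y t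
    proof -
      have Fs: "F \<sigma> z = F (\<sigma> - \<sigma>') (F \<sigma>' z)" for z using is_flow_add[OF F, of "\<sigma> - \<sigma>'" \<sigma>' z] by simp
      have "E t (F \<sigma> y) = E t (F (\<sigma> - \<sigma>') (F \<sigma>' y))" by (simp add: Fs)
      also have "\<dots> = F (\<sigma> - \<sigma>') (E t (F \<sigma>' y))" using LC inq[of y] y t d by auto
      also have "\<dots> = F (\<sigma> - \<sigma>') (F \<sigma>' (E t y))" using near y t by auto
      also have "\<dots> = F \<sigma> (E t y)" by (simp add: Fs)
      finally show ?thesis .
    qed
    moreover have "min \<delta>1 Tq > 0" "min r1 r2 > 0" using d1 rq r2 by auto
    ultimately show ?thesis by blast
  qed
  then show "\<exists>e>0. \<forall>\<sigma>. 0 \<le> \<sigma> \<and> \<sigma> < S + e \<longrightarrow> (\<exists>\<delta>>0. \<exists>r>0. \<forall>y\<in>ball p r. \<forall>t. \<bar>t\<bar> < \<delta> \<longrightarrow> E t (F \<sigma> y) = F \<sigma> (E t y))"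
    using rq(2) by (intro exI[of _ "Tq/2"]) auto
qed

lemma bracket_zero_commute_nonneg:
  fixes F E :: "real \<Rightarrow> 'a::euclidean_space \<Rightarrow> 'a"
  assumes F: "is_flow F V" and fV: "C1_field V DV" and E: "is_flow E W" and fW: "C1_field W DW"
    and bracket: "\<And>y. DW y (V y) = DV y (W y)" and s: "s \<ge> 0" and t: "t0 \<ge> 0"
  shows "E t0 (F s y) = F s (E t0 y)"
proof (rule continuation_induct[where Q="\<lambda>\<tau>. E \<tau> (F s y) = F s (E \<tau> y)", OF _ t])
  fix S :: real assume S: "S \<ge> 0" and hyp: "\<forall>\<tau>. 0 \<le> \<tau> \<and> \<tau> < S \<longrightarrow> E \<tau> (F s y) = F s (E \<tau> y)"
  define q where "q = E S y"
  obtain \<delta> r where dr: "\<delta> > 0" "r > 0" and S1: "\<forall>z\<in>ball q r. \<forall>t. \<bar>t\<bar> < \<delta> \<longrightarrow> E t (F s z) = F s (E t z)"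
    using bracket_zero_commute_near[OF F fV E fW bracket s, where p=q] by blast
  obtain \<tau>' where \<tau>': "0 \<le> \<tau>'" "\<tau>' \<le> S" "S - \<delta>/2 \<le> \<tau>'" "\<tau>' < S \<or> \<tau>' = 0" "E \<tau>' y \<in> ball (E S y) r"
    by (rule continuous_at_earlier_point[OF is_flow_continuous[OF E, of S y] S dr(2) dr(1)])
  have earlier: "E \<tau>' (F s y) = F s (E \<tau>' y)"
  proof (cases "\<tau>' < S")
    case True then show ?thesis using hyp \<tau>' by blast
  next
    case False
    then have "\<tau>' = 0" using \<tau>' by blast
    then show ?thesis using is_flow_zero[OF E] by simp
  qed
  have "E \<tau> (F s y) = F s (E \<tau> y)" if "0 \<le> \<tau>" "\<tau> < S + \<delta>/2" for \<tau>
  proof (cases "\<tau> < S")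
    case True then show ?thesis using hyp that by blast
  next
    case False
    then have d: "\<bar>\<tau> - \<tau>'\<bar> < \<delta>" using \<tau>' that by auto
    have Es: "E \<tau> z = E (\<tau> - \<tau>') (E \<tau>' z)" for z using is_flow_add[OF E, of "\<tau> - \<tau>'" \<tau>' z] by simp
    have "E \<tau> (F s y) = E (\<tau> - \<tau>') (E \<tau>' (F s y))" by (simp add: Es)
    also have "\<dots> = E (\<tau> - \<tau>') (F s (E \<tau>' y))" using earlier by simp
    also have "\<dots> = F s (E (\<tau> - \<tau>') (E \<tau>' y))" using S1 \<tau>'(5) d by (auto simp: q_def)
    also have "\<dots> = F s (E \<tau> y)" by (simp add: Es)
    finally show ?thesis .
  qed
  then show "\<exists>e>0. \<forall>\<tau>. 0 \<le> \<tau> \<and> \<tau> < S + e \<longrightarrow> E \<tau> (F s y) = F s (E \<tau> y)"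
    using dr(1) by (intro exI[of _ "\<delta>/2"]) auto
qed

lemma bracket_zero_flows_commute:
  fixes F E :: "real \<Rightarrow> 'a::euclidean_space \<Rightarrow> 'a"
  assumes F: "is_flow F V" and fV: "C1_field V DV" and E: "is_flow E W" and fW: "C1_field W DW"
    and bracket: "\<And>y. DW y (V y) = DV y (W y)"
  shows "E t (F s y) = F s (E t y)"
proof -
  have P1: "E t (F s y) = F s (E t y)" if "t \<ge> 0" for s t y
  proof (cases "s \<ge> 0")
    case True then show ?thesis using bracket_zero_commute_nonneg[OF F fV E fW bracket True that] by simp
  next
    case False
    then have "- s \<ge> 0" by simp
    from bracket_zero_commute_nonneg[OF F fV E fW bracket this that, of "F s y"]
    have "E t y = F (- s) (E t (F s y))" using is_flow_neg_left[OF F] by simp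
    then have "F s (E t y) = F s (F (- s) (E t (F s y)))" by simp
    then show ?thesis using is_flow_neg_right[OF F] by simp
  qed
  show ?thesis
  proof (cases "t \<ge> 0")
    case True then show ?thesis using P1 by simp
  next
    case False
    then have "- t \<ge> 0" by simp
    from P1[OF this, of s "E t y"]
    have "E (- t) (F s (E t y)) = F s y" using is_flow_neg_left[OF E] by simp
    then have "E t (E (- t) (F s (E t y))) = E t (F s y)" by simp
    then show ?thesis using is_flow_neg_right[OF E] by simp
  qed
qed

section \<open>Projective flows in the plane\<close>

lemma has_derivative_partials:
  assumes "f differentiable (at p)"
  shows "(f has_derivative (\<lambda>h. pdx f p * fst h + pdy f p * snd h)) (at p)"
proof -
  obtain D where D: "(f has_derivative D) (at p)" using assms unfolding differentiable_def by blast
  have lin: "linear D" using D has_derivative_linear by blast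
  have partial: "((\<lambda>t. f (\<gamma> t)) has_field_derivative D e) (at t0)"
    if "((\<lambda>t. \<gamma> t) has_derivative (\<lambda>h. h *\<^sub>R e)) (at t0)" "\<gamma> t0 = p" for \<gamma> e t0
  proof -
    have "((\<lambda>t. f (\<gamma> t)) has_derivative (\<lambda>h. D (h *\<^sub>R e))) (at t0)"
      using has_derivative_compose[OF that(1), of f D] D that(2) by simp
    moreover have "(\<lambda>h. D (h *\<^sub>R e)) = (*) (D e)"
      by (simp add: fun_eq_iff linear_scale[OF lin] mult.commute)
    ultimately show ?thesis by (simp add: has_field_derivative_def)
  qed
  have "((\<lambda>t. f (t, snd p)) has_field_derivative D (1, 0)) (at (fst p))"
    by (rule partial) (auto intro!: derivative_eq_intros)
  then have px: "pdx f p = D (1, 0)" unfolding pdx_def by (rule DERIV_imp_deriv)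
  have "((\<lambda>t. f (fst p, t)) has_field_derivative D (0, 1)) (at (snd p))"
    by (rule partial) (auto intro!: derivative_eq_intros)
  then have py: "pdy f p = D (0, 1)" unfolding pdy_def by (rule DERIV_imp_deriv)
  have "D h = pdx f p * fst h + pdy f p * snd h" for h :: pt
  proof -
    have "h = fst h *\<^sub>R (1, 0) + snd h *\<^sub>R (0, 1)" by (simp add: prod_eq_iff)
    then have "D h = D (fst h *\<^sub>R (1, 0) + snd h *\<^sub>R (0, 1))" by simp
    also have "\<dots> = fst h * D (1, 0) + snd h * D (0, 1)"
      by (simp only: linear_add[OF lin] linear_scale[OF lin] real_scaleR_def)
    finally show ?thesis by (simp add: px py mult.commute)
  qed
  then have "D = (\<lambda>h. pdx f p * fst h + pdy f p * snd h)" by (simp add: fun_eq_iff)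
  then show ?thesis using D by simp
qed

lemma smooth2_differentiable: "smooth2 f \<Longrightarrow> f differentiable (at p)"
  by (erule smooth2.cases) blast

lemma smooth2_pdx: "smooth2 f \<Longrightarrow> smooth2 (pdx f)"
  by (erule smooth2.cases) blast

lemma smooth2_pdy: "smooth2 f \<Longrightarrow> smooth2 (pdy f)"
  by (erule smooth2.cases) blast

lemma smooth2_continuous: "smooth2 f \<Longrightarrow> continuous (at p) f"
  using smooth2_differentiable differentiable_imp_continuous_within by blast

definition planar_field :: "(pt \<Rightarrow> real) \<Rightarrow> (pt \<Rightarrow> real) \<Rightarrow> pt \<Rightarrow> pt" where
  "planar_field a b = (\<lambda>p. (a p, b p))"

definition planar_field_derivative :: "(pt \<Rightarrow> real) \<Rightarrow> (pt \<Rightarrow> real) \<Rightarrow> pt \<Rightarrow> pt \<Rightarrow> pt" where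
  "planar_field_derivative a b =
     (\<lambda>p h. (pdx a p * fst h + pdy a p * snd h, pdx b p * fst h + pdy b p * snd h))"

lemma norm_matrix2_le:
  "norm ((x1 * fst h + x2 * snd h, x3 * fst h + x4 * snd h) :: pt)
     \<le> (\<bar>x1\<bar> + \<bar>x2\<bar> + \<bar>x3\<bar> + \<bar>x4\<bar>) * norm h"
proof -
  have row: "\<bar>u * fst h + v * snd h\<bar> \<le> (\<bar>u\<bar> + \<bar>v\<bar>) * norm h" for u v
  proof -
    have "\<bar>fst h\<bar> \<le> norm h" "\<bar>snd h\<bar> \<le> norm h"
      using norm_fst_le[of "fst h" "snd h"] norm_snd_le[of "snd h" "fst h"] by auto
    then have "\<bar>u\<bar> * \<bar>fst h\<bar> + \<bar>v\<bar> * \<bar>snd h\<bar> \<le> \<bar>u\<bar> * norm h + \<bar>v\<bar> * norm h"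
      by (intro add_mono mult_left_mono) auto
    then show ?thesis using abs_triangle_ineq[of "u * fst h" "v * snd h"]
      by (simp add: abs_mult algebra_simps)
  qed
  show ?thesis
    using norm_Pair_le[of "x1 * fst h + x2 * snd h" "x3 * fst h + x4 * snd h"] row[of x1 x2] row[of x3 x4]
    by (simp add: algebra_simps)
qed

lemma C1_field_planar_field:
  assumes a: "smooth2 a" and b: "smooth2 b"
  shows "C1_field (planar_field a b) (planar_field_derivative a b)"
  unfolding C1_field_def
proof (intro conjI allI impI)
  fix p
  show "(planar_field a b has_derivative planar_field_derivative a b p) (at p)"
    unfolding planar_field_def planar_field_derivative_def
    by (rule has_derivative_Pair[OF has_derivative_partials[OF smooth2_differentiable[OF a]]
          has_derivative_partials[OF smooth2_differentiable[OF b]]])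
next
  fix c :: pt and \<epsilon> :: real assume "\<epsilon> > 0"
  have near: "\<exists>r>0. \<forall>x. dist x c < r \<longrightarrow> \<bar>g x - g c\<bar> < \<epsilon>/4" if "smooth2 g" for g
    using smooth2_continuous[OF that, of c] \<open>\<epsilon> > 0\<close> unfolding continuous_at_eps_delta dist_real_def
    by (metis zero_less_divide_iff zero_less_numeral)
  obtain r1 r2 r3 r4 where r: "r1 > 0" "r2 > 0" "r3 > 0" "r4 > 0"
    and "\<forall>x. dist x c < r1 \<longrightarrow> \<bar>pdx a x - pdx a c\<bar> < \<epsilon>/4"
    and "\<forall>x. dist x c < r2 \<longrightarrow> \<bar>pdy a x - pdy a c\<bar> < \<epsilon>/4"
    and "\<forall>x. dist x c < r3 \<longrightarrow> \<bar>pdx b x - pdx b c\<bar> < \<epsilon>/4"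
    and "\<forall>x. dist x c < r4 \<longrightarrow> \<bar>pdy b x - pdy b c\<bar> < \<epsilon>/4"
    using near[OF smooth2_pdx[OF a]] near[OF smooth2_pdy[OF a]] near[OF smooth2_pdx[OF b]]
      near[OF smooth2_pdy[OF b]] by metis
  then have close: "\<bar>pdx a x - pdx a c\<bar> + \<bar>pdy a x - pdy a c\<bar> + \<bar>pdx b x - pdx b c\<bar> + \<bar>pdy b x - pdy b c\<bar> \<le> \<epsilon>"
    if "x \<in> ball c (min (min r1 r2) (min r3 r4))" for x
    using that by (force simp: dist_commute)
  have "norm (planar_field_derivative a b x h - planar_field_derivative a b c h) \<le> \<epsilon> * norm h"
    if "x \<in> ball c (min (min r1 r2) (min r3 r4))" for x h
  proof -
    have "planar_field_derivative a b x h - planar_field_derivative a b c h =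
        ((pdx a x - pdx a c) * fst h + (pdy a x - pdy a c) * snd h,
         (pdx b x - pdx b c) * fst h + (pdy b x - pdy b c) * snd h)"
      unfolding planar_field_derivative_def by (simp add: algebra_simps)
    then show ?thesis
      using norm_matrix2_le[of _ h] mult_right_mono[OF close[OF that] norm_ge_zero[of h]]
      by (metis (no_types, lifting) order_trans)
  qed
  then show "\<exists>r>0. \<forall>x\<in>ball c r. \<forall>h. norm (planar_field_derivative a b x h
      - planar_field_derivative a b c h) \<le> \<epsilon> * norm h"
    using r by (intro exI[of _ "min (min r1 r2) (min r3 r4)"]) auto
qed

lemma proj_flow_is_flow:
  assumes pf: "proj_flow \<phi>" and vf: "has_vfield \<phi> a b"
  shows "is_flow (piter \<phi>) (planar_field a b)"
  unfolding is_flow_def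
proof (intro conjI allI)
  fix s t y
  show "piter \<phi> (s + t) y = piter \<phi> s (piter \<phi> t y)" using pf unfolding proj_flow_def by simp
next
  fix y show "piter \<phi> 0 y = y" by (simp add: piter_def)
next
  fix t y
  define z where "z = piter \<phi> t y"
  have "((\<lambda>s. s - t) has_vector_derivative 1) (at t)"
    by (auto intro!: derivative_eq_intros simp: has_vector_derivative_def)
  from vector_diff_chain_at[OF this, of "\<lambda>s. piter \<phi> s z"] vf
  have "((\<lambda>s. piter \<phi> (s - t) z) has_vector_derivative planar_field a b z) (at t)"
    unfolding has_vfield_def planar_field_def by (simp add: o_def)
  moreover have "piter \<phi> (s - t) z = piter \<phi> s y" for s
    using pf unfolding proj_flow_def z_def by (metis comp_apply diff_add_cancel)
  ultimately show "((\<lambda>s. piter \<phi> s y) has_vector_derivative planar_field a b (piter \<phi> t y)) (at t)"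
    by (simp add: z_def)
qed

lemma piter_comp: "piter (\<phi> \<circ> \<psi>) z x = piter \<phi> z (piter \<psi> z x)"
  by (simp add: piter_def)

lemma commute_iff_piter_commute:
  "commute \<phi> \<psi> \<longleftrightarrow> (\<forall>s t y. piter \<psi> s (piter \<phi> t y) = piter \<phi> t (piter \<psi> s y))"
  unfolding commute_def by (auto simp: fun_eq_iff)

lemma flows_compose_tendsto:
  fixes F E :: "real \<Rightarrow> 'a::{real_inner, perfect_space} \<Rightarrow> 'a"
  assumes F: "is_flow F V" and fV: "C1_field V DV" and E: "is_flow E W" and fW: "C1_field W DW"
  shows "((\<lambda>z. F z (E z x)) \<longlongrightarrow> x) (at 0)"
proof -
  obtain rF TF MF KF where hF: "rF > 0" "TF > 0" "MF > 0" "KF \<ge> 1"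
    and bF: "\<forall>y\<in>cball x rF. \<forall>\<sigma>. \<bar>\<sigma>\<bar> \<le> TF \<longrightarrow> norm (F \<sigma> y - y) \<le> MF * \<bar>\<sigma>\<bar>"
    and "\<forall>a\<in>cball x rF. \<forall>b\<in>cball x rF. \<forall>\<sigma>. \<bar>\<sigma>\<bar> \<le> TF \<longrightarrow> norm (F \<sigma> a - F \<sigma> b) \<le> KF * norm (a - b)"
    by (rule flow_local_bounds[OF F fV, where c=x])
  obtain rE TE ME KE where hE: "rE > 0" "TE > 0" "ME > 0" "KE \<ge> 1"
    and bE: "\<forall>y\<in>cball x rE. \<forall>\<sigma>. \<bar>\<sigma>\<bar> \<le> TE \<longrightarrow> norm (E \<sigma> y - y) \<le> ME * \<bar>\<sigma>\<bar>"
    and "\<forall>a\<in>cball x rE. \<forall>b\<in>cball x rE. \<forall>\<sigma>. \<bar>\<sigma>\<bar> \<le> TE \<longrightarrow> norm (E \<sigma> a - E \<sigma> b) \<le> KE * norm (a - b)"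
    by (rule flow_local_bounds[OF E fW, where c=x])
  define T where "T = min TF (min TE (rF / ME))"
  have T: "T > 0" "T \<le> TF" "T \<le> TE" "T \<le> rF / ME" using hF hE by (auto simp: T_def)
  have "norm (F z (E z x) - x) \<le> (MF + ME) * \<bar>z\<bar>" if "\<bar>z\<bar> < T" for z
  proof -
    have Ex: "norm (E z x - x) \<le> ME * \<bar>z\<bar>" using bE hE that T by auto
    have "ME * \<bar>z\<bar> \<le> ME * (rF / ME)" using that T hE by (intro mult_left_mono) auto
    then have "E z x \<in> cball x rF" using Ex hE by (simp add: dist_norm norm_minus_commute)
    then have "norm (F z (E z x) - E z x) \<le> MF * \<bar>z\<bar>" using bF that T by auto
    then show ?thesis using Ex norm_triangle_ineq[of "F z (E z x) - E z x" "E z x - x"]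
      by (simp add: algebra_simps)
  qed
  then have "eventually (\<lambda>z. norm (F z (E z x) - x) \<le> (MF + ME) * \<bar>z\<bar>) (at 0)"
    unfolding eventually_at using T by (intro exI[of _ T]) (auto simp: dist_real_def)
  moreover have "((\<lambda>z. (MF + ME) * \<bar>z\<bar>) \<longlongrightarrow> 0) (at (0::real))"
    by (rule tendsto_eq_intros) (auto intro!: tendsto_eq_intros)
  ultimately have "((\<lambda>z. F z (E z x) - x) \<longlongrightarrow> 0) (at 0)"
    by (rule Lim_null_comparison)
  then show ?thesis by (simp add: LIM_zero_iff)
qed

lemma commute_imp_proj_flow_comp:
  assumes pf: "proj_flow \<phi>" "proj_flow \<psi>" and vf: "has_vfield \<phi> a b" "has_vfield \<psi> c d"
    and smooth: "smooth2 a" "smooth2 b" "smooth2 c" "smooth2 d" and "commute \<phi> \<psi>"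
  shows "proj_flow (\<phi> \<circ> \<psi>)"
  unfolding proj_flow_def
proof (intro conjI allI)
  have F: "is_flow (piter \<phi>) (planar_field a b)" and E: "is_flow (piter \<psi>) (planar_field c d)"
    using proj_flow_is_flow pf vf by blast+
  have swap: "piter \<psi> s (piter \<phi> t y) = piter \<phi> t (piter \<psi> s y)" for s t y
    using \<open>commute \<phi> \<psi>\<close> unfolding commute_iff_piter_commute by blast
  fix z w
  show "piter (\<phi> \<circ> \<psi>) (z + w) = piter (\<phi> \<circ> \<psi>) z \<circ> piter (\<phi> \<circ> \<psi>) w"
    by (simp add: fun_eq_iff piter_comp is_flow_add[OF F] is_flow_add[OF E] swap)
next
  fix x
  have "((\<lambda>z. piter \<phi> z (piter \<psi> z x)) \<longlongrightarrow> x) (at 0)"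
    using flows_compose_tendsto[OF proj_flow_is_flow[OF pf(1) vf(1)] C1_field_planar_field[OF smooth(1,2)]
        proj_flow_is_flow[OF pf(2) vf(2)] C1_field_planar_field[OF smooth(3,4)]] .
  moreover have "\<forall>\<^sub>F z in at 0. piter \<phi> z (piter \<psi> z x) = (1 / z) *\<^sub>R (\<phi> \<circ> \<psi>) (z *\<^sub>R x)"
    by (auto simp: eventually_at_filter piter_def)
  ultimately show "((\<lambda>z. (1 / z) *\<^sub>R (\<phi> \<circ> \<psi>) (z *\<^sub>R x)) \<longlongrightarrow> x) (at 0)"
    by (rule Lim_transform_eventually)
qed

lemma proj_flow_comp_imp_commute:
  assumes "proj_flow \<phi>" "proj_flow \<psi>" "proj_flow (\<phi> \<circ> \<psi>)"
  shows "commute \<phi> \<psi>"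
proof -
  define F where "F = piter \<phi>"
  define E where "E = piter \<psi>"
  have F_add: "F (z + w) y = F z (F w y)" and E_add: "E (z + w) y = E z (E w y)" for z w y
    using assms(1,2) unfolding proj_flow_def F_def E_def by simp_all
  have FE_add: "F (z + w) (E (z + w) y) = F z (E z (F w (E w y)))" for z w y
    using assms(3) unfolding proj_flow_def by (simp add: fun_eq_iff piter_comp F_def E_def)
  have F_zero: "F 0 y = y" and E_zero: "E 0 y = y" for y by (simp_all add: F_def E_def piter_def)
  have "E z (F w y) = F w (E z y)" for z w y
  proof -
    have "F z (F w (E z (E w y'))) = F z (E z (F w (E w y')))" for y'
      using FE_add[of z w y'] by (simp only: F_add E_add)
    then have "F (- z) (F z (F w (E z (E w y')))) = F (- z) (F z (E z (F w (E w y'))))" for y'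
      by simp
    then have "F w (E z (E w y')) = E z (F w (E w y'))" for y'
      using F_add[of "- z" z] F_zero by simp
    from this[of "E (- w) y"] show ?thesis using E_add[of w "- w" y] E_zero by simp
  qed
  then show ?thesis unfolding commute_iff_piter_commute F_def E_def by blast
qed

lemma planar_bracket_eq_iff:
  "planar_field_derivative \<alpha> \<beta> p (planar_field \<omega> \<rho> p) = planar_field_derivative \<omega> \<rho> p (planar_field \<alpha> \<beta> p)
    \<longleftrightarrow> pdx \<omega> p * \<alpha> p + pdy \<omega> p * \<beta> p = \<omega> p * pdx \<alpha> p + \<rho> p * pdy \<alpha> p \<and>
        pdx \<rho> p * \<alpha> p + pdy \<rho> p * \<beta> p = \<omega> p * pdx \<beta> p + \<rho> p * pdy \<beta> p"
  unfolding planar_field_derivative_def planar_field_def by (auto simp: prod_eq_iff mult.commute)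

theorem proposition5:
  fixes \<phi> \<psi> :: "pt \<Rightarrow> pt" and \<omega> \<rho> \<alpha> \<beta> :: "pt \<Rightarrow> real"
  assumes "proj_flow \<phi>" and "proj_flow \<psi>"
    and "has_vfield \<phi> \<omega> \<rho>" and "has_vfield \<psi> \<alpha> \<beta>"
    and "smooth2 \<omega>" and "smooth2 \<rho>" and "smooth2 \<alpha>" and "smooth2 \<beta>"
  shows "(commute \<phi> \<psi> \<longleftrightarrow> proj_flow (\<phi> \<circ> \<psi>)) \<and>
         (commute \<phi> \<psi> \<longleftrightarrow>
           (\<forall>p. pdx \<omega> p * \<alpha> p + pdy \<omega> p * \<beta> p = \<omega> p * pdx \<alpha> p + \<rho> p * pdy \<alpha> p \<and>
                pdx \<rho> p * \<alpha> p + pdy \<rho> p * \<beta> p = \<omega> p * pdx \<beta> p + \<rho> p * pdy \<beta> p))"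
proof -
  have F: "is_flow (piter \<phi>) (planar_field \<omega> \<rho>)" and E: "is_flow (piter \<psi>) (planar_field \<alpha> \<beta>)"
    using proj_flow_is_flow assms(1-4) by blast+
  have V: "C1_field (planar_field \<omega> \<rho>) (planar_field_derivative \<omega> \<rho>)"
    and W: "C1_field (planar_field \<alpha> \<beta>) (planar_field_derivative \<alpha> \<beta>)"
    using C1_field_planar_field assms(5-8) by blast+
  have "commute \<phi> \<psi> \<longleftrightarrow> proj_flow (\<phi> \<circ> \<psi>)"
    using commute_imp_proj_flow_comp[OF assms] proj_flow_comp_imp_commute[OF assms(1,2)] by blast
  moreover have "commute \<phi> \<psi> \<longleftrightarrow> (\<forall>p. planar_field_derivative \<alpha> \<beta> p (planar_field \<omega> \<rho> p)
      = planar_field_derivative \<omega> \<rho> p (planar_field \<alpha> \<beta> p))"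
    unfolding commute_iff_piter_commute
    using commuting_flows_bracket[OF F V E W] bracket_zero_flows_commute[OF F V E W] by blast
  ultimately show ?thesis unfolding planar_bracket_eq_iff by blast
qed

end
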